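(* Let $n,k\ge 1$. Let $\mathbf{X}\in\mathbb{R}^{n\times k}$ be a fixed (non-random) matrix, let $\mathbf{D}\in\mathbb{R}^{n\times n}$ be a positive definite diagonal matrix, and let $\mathbf{F},\mathbf{V},\mathbf{\Omega}\in\mathbb{R}^{k\times k}$ be positive definite matrices, and $\boldsymbol{\xi}\in\mathbb{R}^k$. Consider the hierarchical Gaussian model \begin{itemize} \item $\boldsymbol{\theta}\sim N(\boldsymbol{\xi},\mathbf{V})$ (prior on the factor risk premia $\boldsymbol{\theta}=\boldsymbol{\mu}_f\in\mathbb{R}^k$); \item $\mathbf{q}\mid\boldsymbol{\theta}\sim N(\boldsymbol{\theta},\mathbf{\Omega})$ (absolute views on the factor risk premia); \item $\mathbf{f}\mid\boldsymbol{\theta},\mathbf{q}\sim N(\boldsymbol{\theta},\mathbf{F})$ (factor returns, conditionally independent of $\mathbf{q}$ given $\boldsymbol{\theta}$); \item $\mathbf{r}\mid\mathbf{f},\boldsymbol{\theta},\mathbf{q}\sim N(\mathbf{X}\mathbf{f},\mathbf{D})$ (excess asset returns, conditionally independent of $(\boldsymbol{\theta},\mathbf{q})$ given $\mathbf{f}$). \end{itemize} Define $\mathbf{S}:=(\mathbf{V}^{-1}+\mathbf{\Omega}^{-1})^{-1}$, $\mathbb{E}(\mathbf{f}\mid\mathbf{q}):=\mathbf{S}(\mathbf{V}^{-1}\boldsymbol{\xi}+\mathbf{\Omega}^{-1}\mathbf{q})$ and $\mathrm{var}(\mathbf{f}\mid\mathbf{q}):=\mathbf{S}+\mathbf{F}$.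 Then the conditional (posterior predictive) distribution of $\mathbf{r}$ given $\mathbf{q}$ is multivariate normal with \[ \mathrm{var}(\mathbf{r}\mid\mathbf{q})=\Big[\mathbf{D}^{-1}-\mathbf{D}^{-1}\mathbf{X}\big[\mathbf{X}^T\mathbf{D}^{-1}\mathbf{X}+\mathrm{var}(\mathbf{f}\mid\mathbf{q})^{-1}\big]^{-1}\mathbf{X}^T\mathbf{D}^{-1}\Big]^{-1}, \] \[ \mathbb{E}(\mathbf{r}\mid\mathbf{q})=\mathrm{var}(\mathbf{r}\mid\mathbf{q})\,\mathbf{D}^{-1}\mathbf{X}\big[\mathbf{X}^T\mathbf{D}^{-1}\mathbf{X}+\mathrm{var}(\mathbf{f}\mid\mathbf{q})^{-1}\big]^{-1}\mathrm{var}(\mathbf{f}\mid\mathbf{q})^{-1}\,\mathbb{E}(\mathbf{f}\mid\mathbf{q}). \] Consequently, for a risk-aversion parameter $\gamma>0$, the unconstrained mean-variance optimal portfolio $\mathbf{h}^*\in\mathbb{R}^n$, i.e. the maximizer over $\mathbf{w}\in\mathbb{R}^n$ of $\mathbb{E}(\mathbf{w}'\mathbf{r}\mid\mathbf{q})-\frac{\gamma}{2}\mathrm{var}(\mathbf{w}'\mathbf{r}\mid\mathbf{q})$, equals $\gamma^{-1}\mathrm{var}(\mathbf{r}\mid\mathbf{q})^{-1}\mathbb{E}(\mathbf{r}\mid\mathbf{q})$ and is given by \[ \mathbf{h}^*=\gamma^{-1}\mathbf{D}^{-1}\mathbf{X}\big[\mathbf{X}^T\mathbf{D}^{-1}\mathbf{X}+\mathrm{var}(\mathbf{f}\mid\mathbf{q})^{-1}\big]^{-1}\mathrm{var}(\mathbf{f}\mid\mathbf{q})^{-1}\,\mathbb{E}(\mathbf{f}\mid\mathbf{q}).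 \]
   Context: This is the Black-Litterman model applied to an Arbitrage-Pricing-Theory style linear factor model ("BL-APT"): $\mathbf{r}$ is the vector of excess returns of $n$ assets over the next period, $\mathbf{X}$ the matrix of factor exposures of the $n$ assets to $k$ factors, $\mathbf{f}$ the latent factor return vector, $\boldsymbol{\theta}=\boldsymbol{\mu}_f$ its mean (factor risk premia), $\mathbf{q}$ a vector of $k$ absolute views on $\boldsymbol{\mu}_f$ with view uncertainty covariance $\mathbf{\Omega}$. The prime $'$ and superscript $T$ both denote transpose. Expectations and variances in the portfolio objective are taken with respect to the conditional distribution of $\mathbf{r}$ given the observed view $\mathbf{q}$. *)

theory Defs
  imports "HOL-Analysis.Analysis"
begin

definition pos_def_mat :: "real^'n^'n \<Rightarrow> bool" where
  "pos_def_mat A \<longleftrightarrow> transpose A = A \<and> (\<forall>x. x \<noteq> 0 \<longrightarrow> 0 < x \<bullet> (A *v x))"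

definition diagonal_mat :: "real^'n^'n \<Rightarrow> bool" where
  "diagonal_mat A \<longleftrightarrow> (\<forall>i j. i \<noteq> j \<longrightarrow> A $ i $ j = 0)"

definition mvn_density :: "real^'n \<Rightarrow> real^'n^'n \<Rightarrow> real^'n \<Rightarrow> real" where
  "mvn_density mu Sig x =
     exp (- ((x - mu) \<bullet> (matrix_inv Sig *v (x - mu))) / 2)
     / sqrt ((2 * pi) ^ CARD('n) * det Sig)"

definition blapt_density_qr ::
  "real^'k \<Rightarrow> real^'k^'k \<Rightarrow> real^'k^'k \<Rightarrow> real^'k^'k \<Rightarrow> real^'k^'n \<Rightarrow> real^'n^'n
   \<Rightarrow> real^'k \<Rightarrow> real^'n \<Rightarrow> real" where
  "blapt_density_qr xi V Omega F X D q r =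
     (\<integral>theta. (\<integral>f. mvn_density xi V theta * mvn_density theta Omega q
                      * mvn_density theta F f * mvn_density (X *v f) D r \<partial>lborel) \<partial>lborel)"

definition blapt_density_q ::
  "real^'k \<Rightarrow> real^'k^'k \<Rightarrow> real^'k^'k \<Rightarrow> real^'k \<Rightarrow> real" where
  "blapt_density_q xi V Omega q =
     (\<integral>theta. mvn_density xi V theta * mvn_density theta Omega q \<partial>lborel)"

definition blapt_cond_density ::
  "real^'k \<Rightarrow> real^'k^'k \<Rightarrow> real^'k^'k \<Rightarrow> real^'k^'k \<Rightarrow> real^'k^'n \<Rightarrow> real^'n^'n
   \<Rightarrow> real^'k \<Rightarrow> real^'n \<Rightarrow> real" where
  "blapt_cond_density xi V Omega F X D q r =
     blapt_density_qr xi V Omega F X D q r / blapt_density_q xi V Omega q"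

definition blapt_cond_exp ::
  "real^'k \<Rightarrow> real^'k^'k \<Rightarrow> real^'k^'k \<Rightarrow> real^'k^'k \<Rightarrow> real^'k^'n \<Rightarrow> real^'n^'n
   \<Rightarrow> real^'k \<Rightarrow> real^'n \<Rightarrow> real" where
  "blapt_cond_exp xi V Omega F X D q w =
     (\<integral>r. (w \<bullet> r) * blapt_cond_density xi V Omega F X D q r \<partial>lborel)"

definition blapt_cond_var ::
  "real^'k \<Rightarrow> real^'k^'k \<Rightarrow> real^'k^'k \<Rightarrow> real^'k^'k \<Rightarrow> real^'k^'n \<Rightarrow> real^'n^'n
   \<Rightarrow> real^'k \<Rightarrow> real^'n \<Rightarrow> real" where
  "blapt_cond_var xi V Omega F X D q w =
     (\<integral>r. (w \<bullet> r - blapt_cond_exp xi V Omega F X D q w)\<^sup>2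
            * blapt_cond_density xi V Omega F X D q r \<partial>lborel)"

definition mv_objective ::
  "real^'k \<Rightarrow> real^'k^'k \<Rightarrow> real^'k^'k \<Rightarrow> real^'k^'k \<Rightarrow> real^'k^'n \<Rightarrow> real^'n^'n
   \<Rightarrow> real \<Rightarrow> real^'k \<Rightarrow> real^'n \<Rightarrow> real" where
  "mv_objective xi V Omega F X D gamma q w =
     blapt_cond_exp xi V Omega F X D q w - gamma / 2 * blapt_cond_var xi V Omega F X D q w"

end

theory Submission
  imports Defs "HOL-Probability.Probability"
begin

text \<open>
  Everything reduces to Gaussian integrals.  The integral of \<open>exp (- x\<^sup>T A x / 2)\<close> over
  \<open>\<real>\<^sup>n\<close> is \<open>sqrt ((2\<pi>)\<^sup>n / det A)\<close>: integrating out one coordinate completes the square in it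
  and leaves the Schur complement of that diagonal entry, whose determinant accounts for the
  remaining coordinates.  Completing the square in \<open>f\<close> writes \<open>N(f; m, S\<^sub>1) N(r; X f, S\<^sub>2)\<close> as
  a Gaussian kernel in \<open>f\<close> times one in \<open>r\<close> whose precision matrix is, by the Woodbury identity,
  the inverse of \<open>S\<^sub>2 + X S\<^sub>1 X\<^sup>T\<close>; as the product has total mass one, integrating out \<open>f\<close>
  leaves \<open>N(r; X m, S\<^sub>2 + X S\<^sub>1 X\<^sup>T)\<close>.  Completing the square in \<open>\<theta>\<close> in the same way
  splits prior times likelihood into the marginal density of \<open>q\<close> times \<open>N(\<theta>; E(f|q), S)\<close>.
  Integrating out \<open>f\<close> and then \<open>\<theta>\<close> shows that \<open>r\<close> given \<open>q\<close> is \<open>N(X E(f|q), D + X (S + F) X\<^sup>T)\<close>,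
  and the Woodbury identity matches this with the stated \<open>var(r|q)\<close> and \<open>E(r|q)\<close>.
  Then \<open>E(w'r|q) - \<gamma>/2 var(w'r|q) = w'\<mu> - \<gamma>/2 w'\<Sigma>w\<close> is a strictly concave quadratic,
  maximised exactly at \<open>\<Sigma>\<^sup>-\<^sup>1\<mu>/\<gamma>\<close>.
\<close>

section \<open>Matrix algebra\<close>

lemma transpose_eq_self_nth: "transpose A = A \<Longrightarrow> A$i$k = A$k$i"
  unfolding transpose_def by (metis vec_lambda_beta)

lemma matrix_mul_add_rdistrib: "(B + C) ** A = B ** A + C ** (A::real^_^_)"
  by (vector matrix_matrix_mult_def sum.distrib[symmetric] field_simps)

lemma matrix_mul_diff_ldistrib: "A ** (B - C) = A ** B - A ** (C::real^_^_)"
  by (vector matrix_matrix_mult_def sum_subtractf[symmetric] field_simps)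

lemma matrix_mul_diff_rdistrib: "(B - C) ** A = B ** A - C ** (A::real^_^_)"
  by (vector matrix_matrix_mult_def sum_subtractf[symmetric] field_simps)

lemma transpose_add: "transpose (A + B) = transpose A + transpose (B::real^_^_)"
  by (simp add: transpose_def vec_eq_iff)

lemma inner_matrix_vector_transpose: "(X *v u) \<bullet> v = u \<bullet> (transpose X *v (v::real^_))"
  by (metis dot_lmul_matrix inner_commute transpose_matrix_vector)

lemma inner_symmetric_matrix:
  "transpose A = A \<Longrightarrow> u \<bullet> (A *v v) = v \<bullet> (A *v (u::real^'n::finite))"
  by (metis inner_commute inner_matrix_vector_transpose)

lemma matrix_inv_unique_left:
  fixes A B :: "real^'n::finite^'n"
  assumes "B ** A = mat 1"
  shows "matrix_inv A = B"
proof -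
  obtain A' where A': "A ** A' = mat 1" "A' ** A = mat 1"
    using assms invertible_left_inverse unfolding invertible_def by blast
  have "B = A'" by (metis A'(1) assms matrix_mul_assoc matrix_mul_lid matrix_mul_rid)
  have "A ** matrix_inv A = mat 1 \<and> matrix_inv A ** A = mat 1"
    unfolding matrix_inv_def by (rule someI[of _ A']) (use A' in auto)
  then show "matrix_inv A = B"
    by (metis A'(2) \<open>B = A'\<close> matrix_mul_assoc matrix_mul_lid matrix_mul_rid)
qed

lemma matrix_inv_unique_right:
  fixes A B :: "real^'n::finite^'n"
  assumes "A ** B = mat 1"
  shows "matrix_inv A = B"
  using assms matrix_left_right_inverse matrix_inv_unique_left by blast

lemma matrix_inv_left: "invertible (A::real^'n::finite^'n) \<Longrightarrow> matrix_inv A ** A = mat 1"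
  and matrix_inv_right: "invertible (A::real^'n::finite^'n) \<Longrightarrow> A ** matrix_inv A = mat 1"
proof -
  assume "invertible A"
  then obtain A' where A': "A ** A' = mat 1" "A' ** A = mat 1" unfolding invertible_def by blast
  then have "matrix_inv A = A'" using matrix_inv_unique_right[OF A'(1)] by simp
  then show "matrix_inv A ** A = mat 1" "A ** matrix_inv A = mat 1" using A' by auto
qed

lemma matrix_inv_matrix_inv: "invertible (A::real^'n::finite^'n) \<Longrightarrow> matrix_inv (matrix_inv A) = A"
  by (rule matrix_inv_unique_right) (rule matrix_inv_left)

lemma matrix_inv_mult_vector_cancel:
  "invertible (A::real^'n::finite^'n) \<Longrightarrow> matrix_inv A *v (A *v x) = x"
  by (simp add: matrix_vector_mul_assoc matrix_inv_left)

lemma mult_vector_matrix_inv_cancel: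
  "invertible (A::real^'n::finite^'n) \<Longrightarrow> A *v (matrix_inv A *v x) = x"
  by (simp add: matrix_vector_mul_assoc matrix_inv_right)

lemma det_matrix_inv:
  assumes "invertible (A::real^'n::finite^'n)"
  shows "det (matrix_inv A) = 1 / det A"
proof -
  have h: "det (matrix_inv A) * det A = 1"
    using matrix_inv_left[OF assms] det_mul by (metis det_I)
  then have "det A \<noteq> 0" by auto
  with h show ?thesis by (simp add: field_simps)
qed

lemma transpose_matrix_inv:
  fixes A :: "real^'n::finite^'n"
  assumes "invertible A"
  shows "transpose (matrix_inv A) = matrix_inv (transpose A)"
proof -
  have "transpose (matrix_inv A) ** transpose A = mat 1"
    using matrix_inv_right[OF assms] by (metis matrix_transpose_mul transpose_mat)
  then show ?thesis by (metis matrix_inv_unique_left)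
qed

lemma woodbury_right_inverse:
  fixes S1 :: "real^'k::finite^'k" and S2 :: "real^'n::finite^'n" and X :: "real^'k^'n"
  assumes i1: "invertible S1" and i2: "invertible S2"
    and iA: "invertible (matrix_inv S1 + transpose X ** matrix_inv S2 ** X)"
  shows "(matrix_inv S2 - matrix_inv S2 ** X ** matrix_inv (matrix_inv S1 + transpose X ** matrix_inv S2 ** X)
           ** transpose X ** matrix_inv S2) ** (S2 + X ** S1 ** transpose X) = mat 1"
proof -
  define Si1 where "Si1 = matrix_inv S1"
  define Si2 where "Si2 = matrix_inv S2"
  define Xt where "Xt = transpose X"
  define Ai where "Ai = matrix_inv (Si1 + Xt ** Si2 ** X)"
  define W where "W = Si2 ** X ** Ai ** Xt ** Si2"
  have AiA: "Ai ** (Si1 + Xt ** Si2 ** X) = mat 1"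
    unfolding Ai_def Si1_def Si2_def Xt_def by (rule matrix_inv_left[OF iA])
  have S1i: "Si1 ** S1 = mat 1" unfolding Si1_def by (rule matrix_inv_left[OF i1])
  have S2i: "Si2 ** S2 = mat 1" unfolding Si2_def by (rule matrix_inv_left[OF i2])
  have "Ai ** Xt ** Si2 ** X = mat 1 - Ai ** Si1"
    using AiA by (simp add: matrix_add_ldistrib matrix_mul_assoc algebra_simps)
  then have "Ai ** Xt ** Si2 ** X ** S1 = S1 - Ai ** (Si1 ** S1)"
    by (simp add: matrix_mul_diff_rdistrib matrix_mul_assoc)
  then have K: "Ai ** Xt ** Si2 ** X ** S1 = S1 - Ai"
    by (simp add: S1i)
  have "W ** S2 = Si2 ** X ** Ai ** Xt ** (Si2 ** S2)"
    unfolding W_def by (simp add: matrix_mul_assoc)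
  then have WS2: "W ** S2 = Si2 ** X ** Ai ** Xt"
    by (simp add: S2i)
  have "W ** (X ** S1 ** Xt) = Si2 ** X ** (Ai ** Xt ** Si2 ** X ** S1) ** Xt"
    unfolding W_def by (simp add: matrix_mul_assoc)
  also have "\<dots> = Si2 ** X ** S1 ** Xt - Si2 ** X ** Ai ** Xt"
    by (simp add: K matrix_mul_diff_ldistrib matrix_mul_diff_rdistrib)
  finally have WX: "W ** (X ** S1 ** Xt) = Si2 ** X ** S1 ** Xt - Si2 ** X ** Ai ** Xt" .
  have "(Si2 - W) ** (S2 + X ** S1 ** Xt)
      = Si2 ** S2 + Si2 ** (X ** S1 ** Xt) - W ** S2 - W ** (X ** S1 ** Xt)"
    by (simp add: matrix_mul_diff_rdistrib matrix_add_ldistrib algebra_simps)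
  also have "\<dots> = mat 1" unfolding WS2 WX S2i by (simp add: matrix_mul_assoc)
  finally show ?thesis unfolding W_def Si1_def Si2_def Xt_def Ai_def .
qed

lemma woodbury_mean_identity:
  fixes D :: "real^'n::finite^'n" and Vf :: "real^'k::finite^'k" and X :: "real^'k^'n"
  assumes iD: "invertible D" and iV: "invertible Vf"
    and iM: "invertible (transpose X ** matrix_inv D ** X + matrix_inv Vf)"
  shows "(D + X ** Vf ** transpose X) ** matrix_inv D ** X
          ** matrix_inv (transpose X ** matrix_inv D ** X + matrix_inv Vf) ** matrix_inv Vf = X"
proof -
  define Di where "Di = matrix_inv D"
  define Vi where "Vi = matrix_inv Vf"
  define Xt where "Xt = transpose X"
  define Mi where "Mi = matrix_inv (Xt ** Di ** X + Vi)"
  have DDi: "D ** Di = mat 1" unfolding Di_def by (rule matrix_inv_right[OF iD])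
  have VVi: "Vf ** Vi = mat 1" unfolding Vi_def by (rule matrix_inv_right[OF iV])
  have "(Xt ** Di ** X + Vi) ** Mi = mat 1"
    unfolding Mi_def Xt_def Di_def Vi_def by (rule matrix_inv_right[OF iM])
  then have K: "Xt ** Di ** X ** Mi = mat 1 - Vi ** Mi"
    by (simp add: matrix_mul_add_rdistrib algebra_simps)
  have "(D + X ** Vf ** Xt) ** Di ** X ** Mi ** Vi
      = (D ** Di) ** X ** Mi ** Vi + X ** Vf ** (Xt ** Di ** X ** Mi) ** Vi"
    by (simp add: matrix_mul_add_rdistrib matrix_mul_assoc)
  also have "\<dots> = X ** Mi ** Vi + (X ** (Vf ** Vi) - X ** (Vf ** Vi) ** Mi ** Vi)"
    by (simp add: DDi K matrix_mul_diff_ldistrib matrix_mul_diff_rdistrib matrix_mul_assoc)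
  also have "\<dots> = X" by (simp add: VVi)
  finally show ?thesis unfolding Di_def Vi_def Xt_def Mi_def .
qed

lemma complete_square:
  fixes A :: "real^'n::finite^'n"
  assumes t: "transpose A = A" and i: "invertible A"
  shows "g \<bullet> (A *v g) - 2 * (g \<bullet> b)
       = (g - matrix_inv A *v b) \<bullet> (A *v (g - matrix_inv A *v b)) - b \<bullet> (matrix_inv A *v b)"
proof -
  define \<mu> where "\<mu> = matrix_inv A *v b"
  have Am: "A *v \<mu> = b" unfolding \<mu>_def by (rule mult_vector_matrix_inv_cancel[OF i])
  have s: "\<mu> \<bullet> (A *v g) = g \<bullet> b" using inner_symmetric_matrix[OF t, of \<mu> g] Am by simp
  have "(g - \<mu>) \<bullet> (A *v (g - \<mu>)) = g \<bullet> (A *v g) - g \<bullet> b - \<mu> \<bullet> (A *v g) + \<mu> \<bullet> b"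
    by (simp add: matrix_vector_mult_diff_distrib inner_diff_left inner_diff_right Am)
  then show ?thesis unfolding \<mu>_def[symmetric] using s by (simp add: inner_commute)
qed

lemma pos_def_mat_symmetric: "pos_def_mat A \<Longrightarrow> transpose A = A"
  unfolding pos_def_mat_def by blast

lemma pos_def_mat_nonneg: "pos_def_mat A \<Longrightarrow> 0 \<le> x \<bullet> (A *v x)"
  unfolding pos_def_mat_def by (cases "x = 0") (auto intro: less_imp_le)

lemma pos_def_mat_invertible:
  fixes A :: "real^'n::finite^'n"
  assumes "pos_def_mat A"
  shows "invertible A"
proof -
  have "\<forall>x. A *v x = 0 \<longrightarrow> x = 0"
    using assms unfolding pos_def_mat_def by (metis inner_zero_right less_irrefl)
  then show ?thesis using matrix_left_invertible_ker invertible_left_inverse by blast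
qed

lemma pos_def_mat_matrix_inv:
  fixes A :: "real^'n::finite^'n"
  assumes p: "pos_def_mat A"
  shows "pos_def_mat (matrix_inv A)"
proof -
  have i: "invertible A" using pos_def_mat_invertible p by blast
  have "0 < x \<bullet> (matrix_inv A *v x)" if "x \<noteq> 0" for x
  proof -
    define y where "y = matrix_inv A *v x"
    have xy: "x = A *v y" unfolding y_def using mult_vector_matrix_inv_cancel[OF i] by simp
    then have "y \<noteq> 0" using that by auto
    then have "0 < y \<bullet> (A *v y)" using p unfolding pos_def_mat_def by blast
    then show ?thesis unfolding y_def[symmetric] xy
      by (simp add: inner_commute matrix_inv_mult_vector_cancel[OF i])
  qed
  then show ?thesis
    unfolding pos_def_mat_def using transpose_matrix_inv[OF i] pos_def_mat_symmetric[OF p] by simp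
qed

lemma pos_def_mat_add:
  "pos_def_mat A \<Longrightarrow> pos_def_mat B \<Longrightarrow> pos_def_mat (A + B)"
  unfolding pos_def_mat_def
  by (simp add: transpose_add matrix_vector_mult_add_rdistrib inner_add_right add_pos_pos)

lemma pos_def_mat_add_congruence:
  fixes A :: "real^'n::finite^'n" and B :: "real^'k::finite^'k" and X :: "real^'k^'n"
  assumes A: "pos_def_mat A" and B: "pos_def_mat B"
  shows "pos_def_mat (A + X ** B ** transpose X)"
proof -
  have quad: "x \<bullet> ((X ** B ** transpose X) *v x) = (transpose X *v x) \<bullet> (B *v (transpose X *v x))"
    for x
  proof -
    have "x \<bullet> ((X ** B ** transpose X) *v x) = x \<bullet> (X *v (B *v (transpose X *v x)))"
      by (simp only: matrix_vector_mul_assoc matrix_mul_assoc)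
    also have "\<dots> = (B *v (transpose X *v x)) \<bullet> (transpose X *v x)"
      by (metis inner_commute inner_matrix_vector_transpose)
    finally show ?thesis by (rule trans[OF _ inner_commute])
  qed
  have "0 \<le> x \<bullet> ((X ** B ** transpose X) *v x)" for x
    unfolding quad by (rule pos_def_mat_nonneg[OF B])
  moreover have "transpose (X ** B ** transpose X) = X ** B ** transpose X"
    by (simp add: matrix_transpose_mul pos_def_mat_symmetric[OF B] matrix_mul_assoc)
  ultimately show ?thesis using A unfolding pos_def_mat_def
    by (simp add: transpose_add matrix_vector_mult_add_rdistrib inner_add_right add_pos_nonneg)
qed

lemma pos_def_mat_one: "pos_def_mat (mat 1 :: real^'n::finite^'n)"
  unfolding pos_def_mat_def by (simp add: inner_gt_zero_iff)

lemma pos_def_mat_precision: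
  fixes S1 :: "real^'k::finite^'k" and S2 :: "real^'n::finite^'n" and X :: "real^'k^'n"
  assumes "pos_def_mat S1" "pos_def_mat S2"
  shows "pos_def_mat (matrix_inv S1 + transpose X ** matrix_inv S2 ** X)"
  using pos_def_mat_add_congruence[OF pos_def_mat_matrix_inv[OF assms(1)]
      pos_def_mat_matrix_inv[OF assms(2)], of "transpose X"]
  by simp

lemma woodbury_pos_def:
  fixes D :: "real^'n::finite^'n" and Vf :: "real^'k::finite^'k" and X :: "real^'k^'n"
  assumes pD: "pos_def_mat D" and pV: "pos_def_mat Vf"
  defines "M \<equiv> transpose X ** matrix_inv D ** X + matrix_inv Vf"
  shows "matrix_inv (matrix_inv D - matrix_inv D ** X ** matrix_inv M ** transpose X ** matrix_inv D)
           = D + X ** Vf ** transpose X"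
    and "(D + X ** Vf ** transpose X) ** matrix_inv D ** X ** matrix_inv M ** matrix_inv Vf = X"
proof -
  have iD: "invertible D" and iV: "invertible Vf"
    using pos_def_mat_invertible pD pV by blast+
  from pos_def_mat_precision[OF pV pD, of X] have iM: "invertible M" and iM': "invertible (matrix_inv Vf + transpose X ** matrix_inv D ** X)"
    unfolding M_def by (simp_all add: add.commute pos_def_mat_invertible)
  show "matrix_inv (matrix_inv D - matrix_inv D ** X ** matrix_inv M ** transpose X ** matrix_inv D)
      = D + X ** Vf ** transpose X"
    using woodbury_right_inverse[OF iV iD iM'] unfolding M_def
    by (intro matrix_inv_unique_right) (simp add: add.commute)
  show "(D + X ** Vf ** transpose X) ** matrix_inv D ** X ** matrix_inv M ** matrix_inv Vf = X"
    unfolding M_def by (rule woodbury_mean_identity[OF iD iV iM[unfolded M_def]])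
qed

section \<open>The Gaussian integral over \<open>\<real>\<^sup>n\<close>\<close>

text \<open>The integral over \<open>Pi\<^sub>M I\<close> is computed by induction on the coordinate set \<open>I\<close>, so the
  quadratic form, positivity and determinant are relativised to \<open>I\<close>.\<close>

definition quad_on :: "'n::finite set \<Rightarrow> real^'n^'n \<Rightarrow> ('n \<Rightarrow> real) \<Rightarrow> real" where
  "quad_on I A x = (\<Sum>i\<in>I. \<Sum>k\<in>I. x i * A$i$k * x k)"

definition pos_def_on :: "'n::finite set \<Rightarrow> real^'n^'n \<Rightarrow> bool" where
  "pos_def_on I A \<longleftrightarrow> (\<forall>x. (\<exists>i\<in>I. x i \<noteq> 0) \<longrightarrow> 0 < quad_on I A x)"

definition det_on :: "'n::finite set \<Rightarrow> real^'n^'n \<Rightarrow> real" where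
  "det_on I A = det (\<chi> i k. if i \<in> I \<and> k \<in> I then A$i$k else if i = k then 1 else 0)"

definition schur_compl :: "real^'n::finite^'n \<Rightarrow> 'n \<Rightarrow> real^'n^'n" where
  "schur_compl A j = (\<chi> i k. A$i$k - A$i$j * A$j$k / A$j$j)"

lemma quad_on_measurable[measurable]:
  "(\<lambda>x. quad_on I A x) \<in> borel_measurable (Pi\<^sub>M I (\<lambda>_. lborel))"
  unfolding quad_on_def by measurable

lemma quad_on_insert:
  fixes A :: "real^'n::finite^'n"
  assumes "j \<notin> I" "z j = y" "\<And>i. i \<in> I \<Longrightarrow> z i = x i"
  shows "quad_on (insert j I) A z = y * A$j$j * y + (\<Sum>k\<in>I. y * A$j$k * x k)
        + (\<Sum>i\<in>I. x i * A$i$j * y) + quad_on I A x"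
proof -
  have "(\<Sum>i\<in>I. \<Sum>k\<in>I. z i * A$i$k * z k) = (\<Sum>i\<in>I. \<Sum>k\<in>I. x i * A$i$k * x k)"
    "(\<Sum>k\<in>I. z j * A$j$k * z k) = (\<Sum>k\<in>I. y * A$j$k * x k)"
    "(\<Sum>i\<in>I. z i * A$i$j * z j) = (\<Sum>i\<in>I. x i * A$i$j * y)"
    using assms by (auto intro!: sum.cong)
  then show ?thesis
    unfolding quad_on_def sum.insert[OF finite assms(1)] sum.distrib using assms(2) by simp
qed

lemma quad_on_insert_complete_square:
  fixes A :: "real^'n::finite^'n"
  assumes j: "j \<notin> I" and sym: "transpose A = A" and a: "A$j$j \<noteq> 0"
  shows "quad_on (insert j I) A (x(j:=y)) =
     A$j$j * (y + (\<Sum>i\<in>I. A$j$i * x i) / A$j$j)\<^sup>2 + quad_on I (schur_compl A j) x"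
proof -
  define s where "s = (\<Sum>i\<in>I. A$j$i * x i)"
  note sym_nth = transpose_eq_self_nth[OF sym]
  have "quad_on (insert j I) A (x(j:=y)) = y * A$j$j * y + (\<Sum>k\<in>I. y * A$j$k * x k)
        + (\<Sum>i\<in>I. x i * A$i$j * y) + quad_on I A x"
    by (rule quad_on_insert) (use j in auto)
  also have "(\<Sum>i\<in>I. x i * A$i$j * y) = y * s"
    unfolding s_def by (simp add: sum_distrib_left sym_nth mult_ac)
  also have "(\<Sum>k\<in>I. y * A$j$k * x k) = y * s"
    unfolding s_def by (simp add: sum_distrib_left mult_ac)
  finally have full: "quad_on (insert j I) A (x(j:=y)) = y * A$j$j * y + y * s + y * s + quad_on I A x" .
  have "quad_on I (schur_compl A j) x
      = (\<Sum>i\<in>I. \<Sum>k\<in>I. x i * A$i$k * x k - (x i * A$i$j) * (A$j$k * x k) / A$j$j)"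
    unfolding quad_on_def schur_compl_def by (simp add: algebra_simps)
  also have "\<dots> = quad_on I A x - (\<Sum>i\<in>I. x i * A$i$j) * (\<Sum>k\<in>I. A$j$k * x k) / A$j$j"
    unfolding quad_on_def
    by (simp add: sum_subtractf sum_divide_distrib sum_distrib_left sum_distrib_right) (rule sum.swap)
  also have "(\<Sum>i\<in>I. x i * A$i$j) = s" unfolding s_def by (simp add: sym_nth mult_ac)
  also have "(\<Sum>k\<in>I. A$j$k * x k) = s" unfolding s_def by simp
  finally have schur: "quad_on I (schur_compl A j) x = quad_on I A x - s * s / A$j$j" .
  show ?thesis
    unfolding full schur s_def[symmetric] using a by (simp add: power2_eq_square field_simps)
qed

lemma transpose_schur_compl: "transpose A = A \<Longrightarrow> transpose (schur_compl A j) = schur_compl A j"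
  unfolding schur_compl_def transpose_def
  by (simp add: vec_eq_iff transpose_eq_self_nth mult.commute)

lemma pos_def_on_diag_pos:
  fixes A :: "real^'n::finite^'n"
  assumes "pos_def_on (insert j I) A" "j \<notin> I"
  shows "A$j$j > 0"
proof -
  have "0 < quad_on (insert j I) A ((\<lambda>_. 0)(j:=1))"
    using assms(1) unfolding pos_def_on_def by (metis fun_upd_same insertI1 zero_neq_one)
  also have "quad_on (insert j I) A ((\<lambda>_. 0)(j:=1)) = 1 * A$j$j * 1 + (\<Sum>k\<in>I. 1 * A$j$k * 0)
        + (\<Sum>i\<in>I. 0 * A$i$j * 1) + quad_on I A (\<lambda>_. 0)"
    by (rule quad_on_insert) (use assms(2) in auto)
  finally show ?thesis by (simp add: quad_on_def)
qed

lemma pos_def_on_schur_compl: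
  fixes A :: "real^'n::finite^'n"
  assumes pos: "pos_def_on (insert j I) A" and j: "j \<notin> I" and sym: "transpose A = A"
  shows "pos_def_on I (schur_compl A j)"
  unfolding pos_def_on_def
proof (intro allI impI)
  fix x :: "'n \<Rightarrow> real"
  assume "\<exists>i\<in>I. x i \<noteq> 0"
  then obtain i where i: "i \<in> I" "x i \<noteq> 0" by blast
  have a: "A$j$j > 0" using pos_def_on_diag_pos pos j by blast
  define y where "y = - (\<Sum>i\<in>I. A$j$i * x i) / A$j$j"
  have "0 < quad_on (insert j I) A (x(j:=y))"
    using pos i j unfolding pos_def_on_def by (metis fun_upd_other insertCI)
  also have "quad_on (insert j I) A (x(j:=y)) = quad_on I (schur_compl A j) x"
    using quad_on_insert_complete_square[OF j sym, of x y] a unfolding y_def by simp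
  finally show "0 < quad_on I (schur_compl A j) x" .
qed

definition elim_mat :: "'n::finite set \<Rightarrow> 'n \<Rightarrow> ('n \<Rightarrow> real) \<Rightarrow> real^'n^'n" where
  "elim_mat I j u = mat 1 - (\<chi> i k. if i \<in> I \<and> k = j then u i else 0)"

lemma elim_mat_mult_nth:
  fixes B :: "real^'n::finite^'n"
  shows "(elim_mat I j u ** B) $ i $ p = B$i$p - (if i \<in> I then u i * B$j$p else 0)"
proof -
  have "(elim_mat I j u ** B) $ i $ p
      = (\<Sum>q\<in>UNIV. (if i = q then 1 else 0) * B$q$p - (if i \<in> I \<and> q = j then u i else 0) * B$q$p)"
    by (simp add: elim_mat_def matrix_matrix_mult_def mat_def left_diff_distrib)
  also have "\<dots> = B$i$p - (if i \<in> I then u i * B$j$p else 0)"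
    by (simp add: sum_subtractf if_distrib[of "\<lambda>t. t * _"] sum.If_cases)
  finally show ?thesis .
qed

lemma mult_transpose_elim_mat_nth:
  fixes B :: "real^'n::finite^'n"
  shows "(B ** transpose (elim_mat I j u)) $ i $ k = B$i$k - (if k \<in> I then u k * B$i$j else 0)"
proof -
  have "(B ** transpose (elim_mat I j u)) $ i $ k
      = (\<Sum>q\<in>UNIV. B$i$q * (if k = q then 1 else 0) - B$i$q * (if k \<in> I \<and> q = j then u k else 0))"
    by (simp add: elim_mat_def matrix_matrix_mult_def mat_def transpose_def right_diff_distrib)
  also have "\<dots> = B$i$k - (if k \<in> I then u k * B$i$j else 0)"
    by (simp add: sum_subtractf if_distrib[of "\<lambda>t. _ * t"] sum.If_cases mult.commute)
  finally show ?thesis .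
qed

lemma det_elim_mat:
  fixes u :: "'n::finite \<Rightarrow> real"
  assumes "j \<notin> I"
  shows "det (elim_mat I j u) = 1"
proof -
  let ?E = "elim_mat I j u"
  define x :: "real^'n" where "x = - (\<Sum>i\<in>I. u i *s row i (mat 1 :: real^'n^'n))"
  have x_span: "x \<in> vec.span {row k (mat 1 :: real^'n^'n) |k. k \<noteq> j}"
    unfolding x_def
    by (intro vec.span_neg vec.span_sum vec.span_scale vec.span_base) (use assms in auto)
  have "transpose ?E $ a $ b = (\<chi> k. if k = j then row j (mat 1) + x else row k (mat 1)) $ a $ b" for a b
    using assms
    by (auto simp: elim_mat_def transpose_def mat_def row_def x_def sum_component
        if_distrib[of "\<lambda>t. _ * t"] sum.If_cases)
  then have "transpose ?E = (\<chi> k. if k = j then row j (mat 1) + x else row k (mat 1))"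
    by (simp add: vec_eq_iff)
  then have "det (transpose ?E) = det (mat 1 :: real^'n^'n)"
    using det_row_span[OF x_span] by (simp add: row_def[symmetric])
  then show ?thesis by simp
qed

text \<open>Congruence by \<open>elim_mat\<close> turns the padded minor on \<open>insert j I\<close> into the padded minor of
  the Schur complement on \<open>I\<close>, with row \<open>j\<close> scaled by \<open>A$j$j\<close>.\<close>

lemma det_on_insert:
  fixes A :: "real^'n::finite^'n"
  assumes j: "j \<notin> I" and sym: "transpose A = A" and a: "A$j$j \<noteq> 0"
  shows "det_on (insert j I) A = A$j$j * det_on I (schur_compl A j)"
proof -
  define u where "u i = A$i$j / A$j$j" for i
  define E where "E = elim_mat I j u"
  define M :: "real^'n^'n" where
    "M = (\<chi> i k. if i \<in> insert j I \<and> k \<in> insert j I then A$i$k else if i = k then 1 else 0)"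
  define M' :: "real^'n^'n" where
    "M' = (\<chi> i k. if i \<in> I \<and> k \<in> I then schur_compl A j$i$k else if i = k then 1 else 0)"
  have "(E ** M ** transpose E) $ i $ k = (\<chi> i. if i = j then A$j$j *s M'$i else M'$i) $ i $ k" for i k
  proof -
    have "(E ** M ** transpose E) $ i $ k = (M$i$k - (if i \<in> I then u i * M$j$k else 0))
            - (if k \<in> I then u k * (M$i$j - (if i \<in> I then u i * M$j$j else 0)) else 0)"
      unfolding E_def mult_transpose_elim_mat_nth elim_mat_mult_nth ..
    also have "\<dots> = (\<chi> i. if i = j then A$j$j *s M'$i else M'$i) $ i $ k"
      using j a unfolding M_def M'_def u_def schur_compl_def
      by (auto simp: transpose_eq_self_nth[OF sym] field_simps)
    finally show ?thesis .
  qed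
  then have "E ** M ** transpose E = (\<chi> i. if i = j then A$j$j *s M'$i else M'$i)"
    by (simp add: vec_eq_iff)
  moreover have "det (E ** M ** transpose E) = det M"
    using det_elim_mat[OF j] by (simp add: E_def det_mul)
  moreover have "det (\<chi> i. if i = j then A$j$j *s M'$i else M'$i) = A$j$j * det M'"
    using det_row_mul[of j "A$j$j" "\<lambda>i. M'$i" "\<lambda>i. M'$i"] by simp
  ultimately show ?thesis
    unfolding det_on_def M_def[symmetric] M'_def[symmetric] by simp
qed

lemma nn_integral_exp_square:
  fixes a c :: real
  assumes a: "a > 0"
  shows "(\<integral>\<^sup>+y. ennreal (exp (- (a * (y + c)\<^sup>2) / 2)) \<partial>lborel) = ennreal (sqrt (2*pi/a))"
proof -
  define \<sigma> where "\<sigma> = 1 / sqrt a"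
  have \<sigma>: "\<sigma> > 0" "\<sigma>\<^sup>2 = 1/a" unfolding \<sigma>_def using a by (simp_all add: power_divide)
  have eq: "exp (- (a * (y + c)\<^sup>2) / 2) = sqrt (2*pi/a) * normal_density (-c) \<sigma> y" for y
    unfolding normal_density_def \<sigma>(2) using a by (simp add: real_sqrt_divide field_simps)
  have "(\<integral>\<^sup>+y. ennreal (exp (- (a * (y + c)\<^sup>2) / 2)) \<partial>lborel)
      = (\<integral>\<^sup>+y. ennreal (sqrt (2*pi/a)) * ennreal (normal_density (-c) \<sigma> y) \<partial>lborel)"
    unfolding eq by (intro nn_integral_cong, subst ennreal_mult) (use a in auto)
  also have "\<dots> = ennreal (sqrt (2*pi/a)) * (\<integral>\<^sup>+y. ennreal (normal_density (-c) \<sigma> y) \<partial>lborel)"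
    by (rule nn_integral_cmult) simp
  also have "(\<integral>\<^sup>+y. ennreal (normal_density (-c) \<sigma> y) \<partial>lborel) = 1"
    by (subst nn_integral_eq_integral)
      (auto simp: integrable_normal_density[OF \<sigma>(1)] integral_normal_density[OF \<sigma>(1)])
  finally show ?thesis by simp
qed

lemma nn_integral_exp_quad_on_insert:
  fixes A :: "real^'n::finite^'n"
  assumes j: "j \<notin> I" and sym: "transpose A = A" and a: "A$j$j > 0"
  shows "(\<integral>\<^sup>+y. ennreal (exp (- quad_on (insert j I) A (x(j:=y)) / 2)) \<partial>lborel)
      = ennreal (sqrt (2*pi/A$j$j)) * ennreal (exp (- quad_on I (schur_compl A j) x / 2))"
proof -
  define c where "c = (\<Sum>i\<in>I. A$j$i * x i) / A$j$j"
  have "exp (- quad_on (insert j I) A (x(j:=y)) / 2)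
      = exp (- quad_on I (schur_compl A j) x / 2) * exp (- (A$j$j * (y + c)\<^sup>2) / 2)" for y
    using quad_on_insert_complete_square[OF j sym, of x y] a unfolding c_def
    by (simp add: exp_add[symmetric] field_simps)
  then have "(\<integral>\<^sup>+y. ennreal (exp (- quad_on (insert j I) A (x(j:=y)) / 2)) \<partial>lborel)
      = ennreal (exp (- quad_on I (schur_compl A j) x / 2))
        * (\<integral>\<^sup>+y. ennreal (exp (- (A$j$j * (y + c)\<^sup>2) / 2)) \<partial>lborel)"
    by (subst nn_integral_cmult[symmetric]) (auto simp: ennreal_mult)
  then show ?thesis using nn_integral_exp_square[OF a] by (simp add: mult.commute)
qed

lemma gaussian_integral_on:
  fixes A :: "real^'n::finite^'n"
  assumes "transpose A = A" "pos_def_on I A"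
  shows "det_on I A > 0 \<and>
     (\<integral>\<^sup>+x. ennreal (exp (- quad_on I A x / 2)) \<partial>Pi\<^sub>M I (\<lambda>_. lborel))
       = ennreal (sqrt ((2*pi)^card I / det_on I A))"
  using finite[of I] assms
proof (induction I arbitrary: A rule: finite_induct)
  case empty
  have "(\<chi> i k. if i \<in> {} \<and> k \<in> {} then A$i$k else if i = k then 1 else 0) = (mat 1 :: real^'n^'n)"
    by (simp add: mat_def)
  then show ?case by (simp add: det_on_def quad_on_def PiM_empty)
next
  case (insert j I)
  interpret product_sigma_finite "\<lambda>_::'n. lborel :: real measure" by standard
  have a: "A$j$j > 0" using pos_def_on_diag_pos insert by blast
  have IH: "det_on I (schur_compl A j) > 0"
    "(\<integral>\<^sup>+x. ennreal (exp (- quad_on I (schur_compl A j) x / 2)) \<partial>Pi\<^sub>M I (\<lambda>_. lborel))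
       = ennreal (sqrt ((2*pi)^card I / det_on I (schur_compl A j)))"
    using insert.IH[OF transpose_schur_compl pos_def_on_schur_compl] insert.prems insert.hyps by auto
  have det: "det_on (insert j I) A = A$j$j * det_on I (schur_compl A j)"
    using insert a by (intro det_on_insert) auto
  have "(\<integral>\<^sup>+x. ennreal (exp (- quad_on (insert j I) A x / 2)) \<partial>Pi\<^sub>M (insert j I) (\<lambda>_. lborel))
      = (\<integral>\<^sup>+x. (\<integral>\<^sup>+y. ennreal (exp (- quad_on (insert j I) A (x(j:=y)) / 2)) \<partial>lborel)
           \<partial>Pi\<^sub>M I (\<lambda>_. lborel))"
    by (rule product_nn_integral_insert) (use insert in auto)
  also have "\<dots> = (\<integral>\<^sup>+x. ennreal (sqrt (2*pi/A$j$j))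
      * ennreal (exp (- quad_on I (schur_compl A j) x / 2)) \<partial>Pi\<^sub>M I (\<lambda>_. lborel))"
    by (intro nn_integral_cong nn_integral_exp_quad_on_insert) (use insert a in auto)
  also have "\<dots> = ennreal (sqrt (2*pi/A$j$j))
      * (\<integral>\<^sup>+x. ennreal (exp (- quad_on I (schur_compl A j) x / 2)) \<partial>Pi\<^sub>M I (\<lambda>_. lborel))"
    by (rule nn_integral_cmult) simp
  also have "\<dots> = ennreal (sqrt (2*pi/A$j$j) * sqrt ((2*pi)^card I / det_on I (schur_compl A j)))"
    unfolding IH(2) using a IH(1) by (subst ennreal_mult) auto
  also have "sqrt (2*pi/A$j$j) * sqrt ((2*pi)^card I / det_on I (schur_compl A j))
      = sqrt ((2*pi)^card (insert j I) / det_on (insert j I) A)"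
    unfolding det using insert by (simp add: real_sqrt_mult[symmetric] field_simps)
  finally show ?case using det a IH(1) by simp
qed

lemma borel_measurable_vec_nth[measurable]: "(\<lambda>x::real^'n::finite. x $ i) \<in> borel_measurable borel"
  using borel_measurable_inner[of "\<lambda>x. x" borel "\<lambda>_. axis i 1"] by (simp add: inner_axis)

lemma measurable_vec_lambda_PiM[measurable]:
  "(\<lambda>f. \<chi> i. f i) \<in> measurable (Pi\<^sub>M (UNIV::'n::finite set) (\<lambda>_. lborel)) (borel :: (real^'n) measure)"
proof -
  have "\<forall>b\<in>(Basis :: (real^'n) set).
      (\<lambda>f::'n\<Rightarrow>real. (\<chi> i. f i) \<bullet> b) \<in> borel_measurable (Pi\<^sub>M UNIV (\<lambda>_. lborel))"
    by (auto simp: Basis_vec_def inner_axis)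
  then show ?thesis
    by (subst borel_measurable_euclidean_space) simp
qed

lemma lborel_vec_eq_distr_PiM:
  "(lborel :: (real^'n::finite) measure) = distr (Pi\<^sub>M UNIV (\<lambda>_::'n. lborel)) borel (\<lambda>f. \<chi> i. f i)"
proof (rule lborel_eqI)
  interpret product_sigma_finite "\<lambda>_::'n. lborel :: real measure" by standard
  fix l u :: "real^'n"
  assume "\<And>b. b \<in> Basis \<Longrightarrow> l \<bullet> b \<le> u \<bullet> b"
  then have le: "l$i \<le> u$i" for i by (force simp: Basis_vec_def inner_axis)
  have pre: "(\<lambda>f. \<chi> i. f i) -` box l u \<inter> space (Pi\<^sub>M UNIV (\<lambda>_::'n. lborel))
      = Pi\<^sub>E UNIV (\<lambda>i. {l$i<..<u$i})"
    by (auto simp: mem_box_cart space_PiM PiE_def Pi_def extensional_def)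
  have Basis: "(Basis::(real^'n) set) = (\<lambda>i. axis i 1) ` UNIV"
    unfolding Basis_vec_def by auto
  have "emeasure (distr (Pi\<^sub>M UNIV (\<lambda>_::'n. lborel)) borel (\<lambda>f. \<chi> i. f i)) (box l u)
      = emeasure (Pi\<^sub>M UNIV (\<lambda>_::'n. lborel)) (Pi\<^sub>E UNIV (\<lambda>i. {l$i<..<u$i}))"
    by (subst emeasure_distr) (auto simp: pre)
  also have "\<dots> = (\<Prod>i\<in>UNIV. ennreal (u$i - l$i))"
    using le by (subst emeasure_PiM) auto
  also have "\<dots> = ennreal (\<Prod>i\<in>UNIV. (u - l) \<bullet> axis i 1)"
    using le by (simp add: prod_ennreal inner_axis)
  also have "(\<Prod>i\<in>UNIV. (u - l) \<bullet> axis i 1) = (\<Prod>b\<in>Basis. (u - l) \<bullet> b)"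
    unfolding Basis by (subst prod.reindex) (auto simp: inj_on_def axis_eq_axis)
  finally show "emeasure (distr (Pi\<^sub>M UNIV (\<lambda>_::'n. lborel)) borel (\<lambda>f. \<chi> i. f i)) (box l u)
      = (\<Prod>b\<in>Basis. (u - l) \<bullet> b)" .
qed simp

lemma borel_measurable_matrix_vector_mult[measurable (raw)]:
  fixes A :: "real^'m::finite^'n::finite"
  assumes "f \<in> borel_measurable M"
  shows "(\<lambda>x. A *v f x) \<in> borel_measurable M"
proof -
  have "continuous_on UNIV (\<lambda>x::real^'m. A *v x)"
    by (intro linear_continuous_on matrix_vector_mul_bounded_linear)
  then show ?thesis
    using assms by (rule measurable_compose[rotated, OF borel_measurable_continuous_onI])
qed

lemma quad_on_UNIV: "quad_on UNIV A f = (\<chi> i. f i) \<bullet> (A *v (\<chi> i. f i))"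
  unfolding quad_on_def inner_vec_def matrix_vector_mult_def
  by (simp add: sum_distrib_left mult_ac)

lemma pos_def_on_UNIV: "pos_def_mat A \<Longrightarrow> pos_def_on UNIV A"
  unfolding pos_def_on_def pos_def_mat_def quad_on_UNIV
  by (metis UNIV_I vec_eq_iff vec_lambda_beta zero_index)

lemma det_on_UNIV: "det_on UNIV A = det A"
  unfolding det_on_def by simp

lemma gaussian_integral_UNIV:
  fixes A :: "real^'n::finite^'n"
  assumes "pos_def_mat A"
  shows "det A > 0 \<and>
    (\<integral>\<^sup>+x. ennreal (exp (- (x \<bullet> (A *v x)) / 2)) \<partial>lborel) = ennreal (sqrt ((2*pi)^CARD('n) / det A))"
proof -
  have "(\<integral>\<^sup>+x. ennreal (exp (- (x \<bullet> (A *v x)) / 2)) \<partial>lborel)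
      = (\<integral>\<^sup>+x. ennreal (exp (- quad_on UNIV A x / 2)) \<partial>Pi\<^sub>M UNIV (\<lambda>_. lborel))"
    unfolding quad_on_UNIV by (subst lborel_vec_eq_distr_PiM) (subst nn_integral_distr, auto)
  then show ?thesis
    using gaussian_integral_on[OF pos_def_mat_symmetric pos_def_on_UNIV, OF assms assms]
    by (simp add: det_on_UNIV)
qed

lemma pos_def_mat_det_pos: "pos_def_mat A \<Longrightarrow> det A > 0"
  using gaussian_integral_UNIV by blast

lemma nn_integral_gaussian:
  fixes A :: "real^'n::finite^'n"
  assumes "pos_def_mat A"
  shows "(\<integral>\<^sup>+x. ennreal (exp (- ((x - c) \<bullet> (A *v (x - c))) / 2)) \<partial>lborel)
       = ennreal (sqrt ((2*pi)^CARD('n) / det A))"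
proof -
  have "(\<integral>\<^sup>+x. ennreal (exp (- ((x - c) \<bullet> (A *v (x - c))) / 2)) \<partial>lborel)
      = (\<integral>\<^sup>+x. ennreal (exp (- ((c + x - c) \<bullet> (A *v (c + x - c))) / 2)) \<partial>lborel)"
    by (subst lborel_distr_plus[symmetric, of c]) (subst nn_integral_distr, auto)
  then show ?thesis using gaussian_integral_UNIV[OF assms] by simp
qed

lemma nn_integral_gaussian_cmult:
  fixes A :: "real^'n::finite^'n"
  assumes "pos_def_mat A" "K \<ge> 0"
  shows "(\<integral>\<^sup>+x. ennreal (K * exp (- ((x - c) \<bullet> (A *v (x - c))) / 2)) \<partial>lborel)
       = ennreal (K * sqrt ((2*pi)^CARD('n) / det A))"
proof -
  have "(\<integral>\<^sup>+x. ennreal (K * exp (- ((x - c) \<bullet> (A *v (x - c))) / 2)) \<partial>lborel)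
      = (\<integral>\<^sup>+x. ennreal K * ennreal (exp (- ((x - c) \<bullet> (A *v (x - c))) / 2)) \<partial>lborel)"
    using assms(2) by (intro nn_integral_cong) (simp add: ennreal_mult)
  also have "\<dots> = ennreal K * ennreal (sqrt ((2*pi)^CARD('n) / det A))"
    using nn_integral_gaussian[OF assms(1), of c] by (subst nn_integral_cmult) auto
  finally show ?thesis
    using assms(2) pos_def_mat_det_pos[OF assms(1)] by (simp add: ennreal_mult)
qed

section \<open>The multivariate normal density\<close>

lemma mvn_density_measurable[measurable (raw)]:
  fixes f g :: "'a \<Rightarrow> real^'n::finite"
  assumes [measurable]: "f \<in> borel_measurable M" "g \<in> borel_measurable M"
  shows "(\<lambda>x. mvn_density (f x) S (g x)) \<in> borel_measurable M"
  unfolding mvn_density_def by measurable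

lemma mvn_density_nonneg: "pos_def_mat S \<Longrightarrow> 0 \<le> mvn_density m S x"
  unfolding mvn_density_def using pos_def_mat_det_pos[of S] by simp

lemma nn_integral_mvn_density:
  fixes S :: "real^'n::finite^'n"
  assumes S: "pos_def_mat S"
  shows "(\<integral>\<^sup>+x. ennreal (mvn_density m S x) \<partial>lborel) = 1"
proof -
  have i: "invertible S" using pos_def_mat_invertible S by blast
  have dS: "det S > 0" using pos_def_mat_det_pos S by blast
  define K where "K = 1 / sqrt ((2 * pi) ^ CARD('n) * det S)"
  have "(\<integral>\<^sup>+x. ennreal (mvn_density m S x) \<partial>lborel)
      = (\<integral>\<^sup>+x. ennreal (K * exp (- ((x - m) \<bullet> (matrix_inv S *v (x - m))) / 2)) \<partial>lborel)"
    unfolding mvn_density_def K_def by simp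
  also have "\<dots> = ennreal (K * sqrt ((2*pi)^CARD('n) / det (matrix_inv S)))"
    by (rule nn_integral_gaussian_cmult[OF pos_def_mat_matrix_inv[OF S]]) (auto simp: K_def intro!: mult_nonneg_nonneg less_imp_le[OF dS])
  also have "\<dots> = 1"
    unfolding det_matrix_inv[OF i] K_def using dS by (simp add: real_sqrt_mult real_sqrt_divide)
  finally show ?thesis .
qed

lemma gaussian_kernel_eq_mvn_density:
  fixes P :: "real^'n::finite^'n"
  assumes P: "pos_def_mat P" and K: "K \<ge> 0" and L: "L \<ge> 0"
    and mass: "(\<integral>\<^sup>+x. ennreal (K * exp (- ((x - c) \<bullet> (P *v (x - c))) / 2)) \<partial>lborel) = ennreal L"
  shows "K * exp (- ((x - c) \<bullet> (P *v (x - c))) / 2) = L * mvn_density c (matrix_inv P) x"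
proof -
  have i: "invertible P" using pos_def_mat_invertible P by blast
  have dP: "det P > 0" using pos_def_mat_det_pos P by blast
  have KL: "K * sqrt ((2*pi)^CARD('n) / det P) = L"
    using mass nn_integral_gaussian_cmult[OF P K, of c] K L dP by simp
  show ?thesis
    unfolding mvn_density_def matrix_inv_matrix_inv[OF i] det_matrix_inv[OF i] KL[symmetric]
    using dP by (simp add: real_sqrt_divide real_sqrt_mult field_simps)
qed

lemma mvn_density_pos: "pos_def_mat S \<Longrightarrow> 0 < mvn_density m S x"
  unfolding mvn_density_def using pos_def_mat_det_pos[of S] by simp

lemma mvn_density_commute:
  fixes a b :: "real^'n::finite"
  shows "mvn_density a S b = mvn_density b S a"
proof -
  have "(b - a) \<bullet> (M *v (b - a)) = (a - b) \<bullet> (M *v (a - b))" for M :: "real^'n^'n"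
    by (simp add: matrix_vector_mult_diff_distrib inner_diff_left inner_diff_right algebra_simps)
  then show ?thesis unfolding mvn_density_def by simp
qed

section \<open>Linear Gaussian models\<close>

lemma quadratic_form_linear_model:
  fixes S1 :: "real^'k::finite^'k" and S2 :: "real^'n::finite^'n" and X :: "real^'k^'n"
    and r :: "real^'n" and m f :: "real^'k"
  assumes p1: "pos_def_mat S1" and p2: "pos_def_mat S2"
  defines "A \<equiv> matrix_inv S1 + transpose X ** matrix_inv S2 ** X"
  defines "P \<equiv> matrix_inv S2 - matrix_inv S2 ** X ** matrix_inv A ** transpose X ** matrix_inv S2"
  defines "\<mu> \<equiv> matrix_inv A *v (transpose X *v (matrix_inv S2 *v (r - X *v m)))"
  shows "(f - m) \<bullet> (matrix_inv S1 *v (f - m)) + (r - X *v f) \<bullet> (matrix_inv S2 *v (r - X *v f))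
       = (f - (m + \<mu>)) \<bullet> (A *v (f - (m + \<mu>))) + (r - X *v m) \<bullet> (P *v (r - X *v m))"
proof -
  define Si1 where "Si1 = matrix_inv S1"
  define Si2 where "Si2 = matrix_inv S2"
  define Xt where "Xt = transpose X"
  define g where "g = f - m"
  define s where "s = r - X *v m"
  define b where "b = Xt *v (Si2 *v s)"
  have t2: "transpose Si2 = Si2"
    unfolding Si2_def using pos_def_mat_symmetric pos_def_mat_matrix_inv p2 by blast
  have pA: "pos_def_mat A"
    unfolding A_def by (rule pos_def_mat_precision[OF p1 p2])
  have tA: "transpose A = A" using pos_def_mat_symmetric pA by blast
  have iA: "invertible A" using pos_def_mat_invertible pA by blast
  have rf: "r - X *v f = s - X *v g" unfolding s_def g_def by (simp add: matrix_vector_mult_diff_distrib)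
  have e1: "(X *v g) \<bullet> (Si2 *v s) = g \<bullet> b"
    unfolding b_def Xt_def by (rule inner_matrix_vector_transpose)
  have e1': "s \<bullet> (Si2 *v (X *v g)) = g \<bullet> b"
    using inner_symmetric_matrix[OF t2, of s "X *v g"] e1 by simp
  have e2: "(X *v g) \<bullet> (Si2 *v (X *v g)) = g \<bullet> ((Xt ** Si2 ** X) *v g)"
    unfolding Xt_def by (simp add: inner_matrix_vector_transpose matrix_vector_mul_assoc[symmetric])
  have Ag: "g \<bullet> (A *v g) = g \<bullet> (Si1 *v g) + g \<bullet> ((Xt ** Si2 ** X) *v g)"
    unfolding A_def Si1_def Si2_def Xt_def by (simp add: matrix_vector_mult_add_rdistrib inner_add_right)
  have L: "(f - m) \<bullet> (Si1 *v (f - m)) + (r - X *v f) \<bullet> (Si2 *v (r - X *v f))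
      = g \<bullet> (A *v g) - 2 * (g \<bullet> b) + s \<bullet> (Si2 *v s)"
    unfolding rf g_def[symmetric] Ag
    by (simp add: matrix_vector_mult_diff_distrib inner_diff_left inner_diff_right e1 e1' e2)
  have cs: "g \<bullet> (A *v g) - 2 * (g \<bullet> b) = (g - \<mu>) \<bullet> (A *v (g - \<mu>)) - b \<bullet> (matrix_inv A *v b)"
    unfolding \<mu>_def b_def Xt_def Si2_def s_def by (rule complete_square[OF tA iA])
  have "s \<bullet> ((Si2 ** X ** matrix_inv A ** Xt ** Si2) *v s) = s \<bullet> (Si2 *v (X *v (matrix_inv A *v b)))"
    unfolding b_def by (simp add: matrix_vector_mul_assoc matrix_mul_assoc)
  also have "\<dots> = (X *v (matrix_inv A *v b)) \<bullet> (Si2 *v s)" by (rule inner_symmetric_matrix[OF t2])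
  also have "\<dots> = (matrix_inv A *v b) \<bullet> b" unfolding b_def Xt_def by (rule inner_matrix_vector_transpose)
  finally have "s \<bullet> (P *v s) = s \<bullet> (Si2 *v s) - b \<bullet> (matrix_inv A *v b)"
    unfolding P_def Si2_def[symmetric] Xt_def[symmetric]
    by (simp add: matrix_vector_mult_diff_rdistrib inner_diff_right inner_commute)
  with L cs show ?thesis
    unfolding Si1_def Si2_def s_def g_def by (simp add: algebra_simps)
qed

lemma mvn_density_linear_model_kernel:
  fixes S1 :: "real^'k::finite^'k" and S2 :: "real^'n::finite^'n" and X :: "real^'k^'n"
    and m f :: "real^'k" and r :: "real^'n"
  assumes p1: "pos_def_mat S1" and p2: "pos_def_mat S2"
  defines "A \<equiv> matrix_inv S1 + transpose X ** matrix_inv S2 ** X"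
  defines "P \<equiv> matrix_inv S2 - matrix_inv S2 ** X ** matrix_inv A ** transpose X ** matrix_inv S2"
  defines "\<mu> \<equiv> \<lambda>r. matrix_inv A *v (transpose X *v (matrix_inv S2 *v (r - X *v m)))"
  defines "c \<equiv> 1 / sqrt ((2 * pi) ^ CARD('k) * det S1) * (1 / sqrt ((2 * pi) ^ CARD('n) * det S2))"
  shows "mvn_density m S1 f * mvn_density (X *v f) S2 r
      = c * exp (- ((r - X *v m) \<bullet> (P *v (r - X *v m))) / 2)
        * exp (- ((f - (m + \<mu> r)) \<bullet> (A *v (f - (m + \<mu> r)))) / 2)"
proof -
  have "mvn_density m S1 f * mvn_density (X *v f) S2 r
      = c * exp (- ((f - m) \<bullet> (matrix_inv S1 *v (f - m))
                    + (r - X *v f) \<bullet> (matrix_inv S2 *v (r - X *v f))) / 2)"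
    unfolding mvn_density_def c_def by (simp add: exp_add[symmetric] field_simps)
  then show ?thesis
    unfolding quadratic_form_linear_model[OF p1 p2] A_def[symmetric] P_def[symmetric] \<mu>_def
    by (simp add: exp_add[symmetric] field_simps)
qed

lemma nn_integral_linear_model_joint_density:
  fixes S1 :: "real^'k::finite^'k" and S2 :: "real^'n::finite^'n" and X :: "real^'k^'n"
  assumes p1: "pos_def_mat S1" and p2: "pos_def_mat S2"
  shows "(\<integral>\<^sup>+r. (\<integral>\<^sup>+f. ennreal (mvn_density m S1 f * mvn_density (X *v f) S2 r) \<partial>lborel) \<partial>lborel) = 1"
proof -
  have psf: "pair_sigma_finite (lborel :: (real^'k) measure) (lborel :: (real^'n) measure)"
    by (simp add: pair_sigma_finite_def lborel.sigma_finite_measure_axioms)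
  have "(\<integral>\<^sup>+r. (\<integral>\<^sup>+f. ennreal (mvn_density m S1 f * mvn_density (X *v f) S2 r) \<partial>lborel) \<partial>lborel)
      = (\<integral>\<^sup>+f. (\<integral>\<^sup>+r. ennreal (mvn_density m S1 f * mvn_density (X *v f) S2 r) \<partial>lborel) \<partial>lborel)"
    by (rule pair_sigma_finite.Fubini'[OF psf]) measurable
  also have "\<dots> = (\<integral>\<^sup>+f. ennreal (mvn_density m S1 f)
                      * (\<integral>\<^sup>+r. ennreal (mvn_density (X *v f) S2 r) \<partial>lborel) \<partial>lborel)"
    by (intro nn_integral_cong, subst nn_integral_cmult[symmetric])
      (auto simp: ennreal_mult mvn_density_nonneg[OF p1] mvn_density_nonneg[OF p2])
  also have "\<dots> = 1"
    by (simp add: nn_integral_mvn_density[OF p2] nn_integral_mvn_density[OF p1])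
  finally show ?thesis .
qed

text \<open>The normalising constant of the marginal of \<open>r\<close> is never computed: the kernel in \<open>r\<close> left
  after integrating out \<open>f\<close> has total mass one.\<close>

lemma nn_integral_mvn_density_convolution:
  fixes S1 :: "real^'k::finite^'k" and S2 :: "real^'n::finite^'n" and X :: "real^'k^'n"
  assumes p1: "pos_def_mat S1" and p2: "pos_def_mat S2"
  shows "(\<integral>\<^sup>+f. ennreal (mvn_density m S1 f * mvn_density (X *v f) S2 r) \<partial>lborel)
       = ennreal (mvn_density (X *v m) (S2 + X ** S1 ** transpose X) r)"
proof -
  define A where "A = matrix_inv S1 + transpose X ** matrix_inv S2 ** X"
  define P where "P = matrix_inv S2 - matrix_inv S2 ** X ** matrix_inv A ** transpose X ** matrix_inv S2"
  define \<mu> where "\<mu> = (\<lambda>r. matrix_inv A *v (transpose X *v (matrix_inv S2 *v (r - X *v m))))"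
  define c where "c = 1 / sqrt ((2 * pi) ^ CARD('k) * det S1) * (1 / sqrt ((2 * pi) ^ CARD('n) * det S2))"
  define Kc where "Kc = c * sqrt ((2*pi)^CARD('k) / det A)"
  have pA: "pos_def_mat A"
    unfolding A_def by (rule pos_def_mat_precision[OF p1 p2])
  have "P ** (S2 + X ** S1 ** transpose X) = mat 1"
    unfolding P_def A_def
    by (rule woodbury_right_inverse) (use pos_def_mat_invertible p1 p2 pA[unfolded A_def] in auto)
  then have P_inv: "matrix_inv P = S2 + X ** S1 ** transpose X"
    and pP: "pos_def_mat P"
    using matrix_inv_unique_left matrix_inv_unique_right
      pos_def_mat_matrix_inv[OF pos_def_mat_add_congruence[OF p2 p1, of X]] by metis+
  have c0: "c \<ge> 0" and Kc0: "Kc \<ge> 0"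
    unfolding Kc_def c_def
    using pos_def_mat_det_pos[OF p1] pos_def_mat_det_pos[OF p2] pos_def_mat_det_pos[OF pA] by simp_all
  have If: "(\<integral>\<^sup>+f. ennreal (mvn_density m S1 f * mvn_density (X *v f) S2 r) \<partial>lborel)
       = ennreal (Kc * exp (- ((r - X *v m) \<bullet> (P *v (r - X *v m))) / 2))" for r
  proof -
    have "(\<integral>\<^sup>+f. ennreal (mvn_density m S1 f * mvn_density (X *v f) S2 r) \<partial>lborel)
        = (\<integral>\<^sup>+f. ennreal ((c * exp (- ((r - X *v m) \<bullet> (P *v (r - X *v m))) / 2))
                 * exp (- ((f - (m + \<mu> r)) \<bullet> (A *v (f - (m + \<mu> r)))) / 2)) \<partial>lborel)"
      unfolding mvn_density_linear_model_kernel[OF p1 p2] A_def P_def \<mu>_def c_def ..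
    also have "\<dots> = ennreal (c * exp (- ((r - X *v m) \<bullet> (P *v (r - X *v m))) / 2)
                              * sqrt ((2*pi)^CARD('k) / det A))"
      by (rule nn_integral_gaussian_cmult[OF pA]) (simp add: c0)
    finally show ?thesis by (simp add: Kc_def mult_ac)
  qed
  have "(\<integral>\<^sup>+r. ennreal (Kc * exp (- ((r - X *v m) \<bullet> (P *v (r - X *v m))) / 2)) \<partial>lborel) = ennreal 1"
    using nn_integral_linear_model_joint_density[OF p1 p2, of m X] unfolding If by simp
  from gaussian_kernel_eq_mvn_density[OF pP Kc0 _ this]
  show ?thesis unfolding If P_inv by simp
qed

lemma integral_mvn_density_convolution:
  fixes S1 :: "real^'k::finite^'k" and S2 :: "real^'n::finite^'n" and X :: "real^'k^'n"
  assumes p1: "pos_def_mat S1" and p2: "pos_def_mat S2"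
  shows "(\<integral>f. mvn_density m S1 f * mvn_density (X *v f) S2 r \<partial>lborel)
       = mvn_density (X *v m) (S2 + X ** S1 ** transpose X) r"
  using p1 p2 pos_def_mat_add_congruence[OF p2 p1, of X]
  by (intro has_bochner_integral_integral_eq has_bochner_integral_nn_integral)
    (auto simp: nn_integral_mvn_density_convolution mvn_density_nonneg)

lemma mvn_density_linear_model_factor:
  fixes S1 :: "real^'k::finite^'k" and S2 :: "real^'n::finite^'n" and X :: "real^'k^'n"
    and m f :: "real^'k" and r :: "real^'n"
  assumes p1: "pos_def_mat S1" and p2: "pos_def_mat S2"
  defines "A \<equiv> matrix_inv S1 + transpose X ** matrix_inv S2 ** X"
  shows "mvn_density m S1 f * mvn_density (X *v f) S2 r
      = mvn_density (X *v m) (S2 + X ** S1 ** transpose X) r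
        * mvn_density (m + matrix_inv A *v (transpose X *v (matrix_inv S2 *v (r - X *v m))))
            (matrix_inv A) f"
proof -
  define P where "P = matrix_inv S2 - matrix_inv S2 ** X ** matrix_inv A ** transpose X ** matrix_inv S2"
  define c where "c = 1 / sqrt ((2 * pi) ^ CARD('k) * det S1) * (1 / sqrt ((2 * pi) ^ CARD('n) * det S2))"
  define \<nu> where "\<nu> = m + matrix_inv A *v (transpose X *v (matrix_inv S2 *v (r - X *v m)))"
  define Z where "Z = sqrt ((2*pi)^CARD('k) / det A)"
  define K where "K = c * exp (- ((r - X *v m) \<bullet> (P *v (r - X *v m))) / 2)"
  have pA: "pos_def_mat A"
    unfolding A_def by (rule pos_def_mat_precision[OF p1 p2])
  have Z0: "Z \<ge> 0" and K0: "K \<ge> 0"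
    unfolding Z_def K_def c_def
    using pos_def_mat_det_pos[OF p1] pos_def_mat_det_pos[OF p2] pos_def_mat_det_pos[OF pA] by simp_all
  have prod: "mvn_density m S1 f' * mvn_density (X *v f') S2 r
      = K * exp (- ((f' - \<nu>) \<bullet> (A *v (f' - \<nu>))) / 2)" for f'
    unfolding mvn_density_linear_model_kernel[OF p1 p2] A_def[symmetric] P_def[symmetric]
      c_def[symmetric] K_def \<nu>_def by (simp add: add.assoc)
  have "ennreal (mvn_density (X *v m) (S2 + X ** S1 ** transpose X) r)
      = (\<integral>\<^sup>+f'. ennreal (K * exp (- ((f' - \<nu>) \<bullet> (A *v (f' - \<nu>))) / 2)) \<partial>lborel)"
    unfolding nn_integral_mvn_density_convolution[OF p1 p2, symmetric] prod ..
  also have "\<dots> = ennreal (K * Z)"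
    unfolding Z_def by (rule nn_integral_gaussian_cmult[OF pA K0])
  finally have KZ: "K * Z = mvn_density (X *v m) (S2 + X ** S1 ** transpose X) r"
    using K0 Z0 mvn_density_nonneg[OF pos_def_mat_add_congruence[OF p2 p1]] by simp
  have "1 * exp (- ((f - \<nu>) \<bullet> (A *v (f - \<nu>))) / 2) = (1 * Z) * mvn_density \<nu> (matrix_inv A) f"
    using Z0 unfolding Z_def
    by (intro gaussian_kernel_eq_mvn_density[OF pA zero_le_one] nn_integral_gaussian_cmult[OF pA]) simp_all
  then show ?thesis
    unfolding prod \<nu>_def[symmetric] KZ[symmetric] by (simp add: mult.assoc)
qed

section \<open>Moments of linear functionals\<close>

lemma nn_integral_normal_density_sq:
  assumes s: "\<sigma> > 0"
  shows "(\<integral>\<^sup>+x. ennreal (normal_density \<mu> \<sigma> x * (x - c)\<^sup>2) \<partial>lborel) = ennreal ((\<mu> - c)\<^sup>2 + \<sigma>\<^sup>2)"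
proof -
  have h1: "has_bochner_integral lborel (\<lambda>x. normal_density \<mu> \<sigma> x * (x - \<mu>)^(2*1)) (\<sigma>\<^sup>2)"
    using normal_moment_even[OF s, of \<mu> 1] by (simp add: field_simps)
  have h2: "has_bochner_integral lborel (\<lambda>x. normal_density \<mu> \<sigma> x * (x - \<mu>)^(2*0+1)) 0"
    using normal_moment_odd[OF s, of \<mu> 0] by simp
  have h3: "has_bochner_integral lborel (\<lambda>x. normal_density \<mu> \<sigma> x) 1"
    using integrable_normal_density[OF s] integral_normal_density[OF s] has_bochner_integral_iff
    by blast
  have "has_bochner_integral lborel (\<lambda>x. normal_density \<mu> \<sigma> x * (x - \<mu>)^(2*1)
         + (2 * (\<mu> - c)) * (normal_density \<mu> \<sigma> x * (x - \<mu>)^(2*0+1))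
         + (\<mu> - c)\<^sup>2 * normal_density \<mu> \<sigma> x)
         (\<sigma>\<^sup>2 + (2 * (\<mu> - c)) * 0 + (\<mu> - c)\<^sup>2 * 1)"
    by (intro has_bochner_integral_add has_bochner_integral_mult_right h1 h2 h3)
  moreover have "(\<lambda>x. normal_density \<mu> \<sigma> x * (x - \<mu>)^(2*1)
         + (2 * (\<mu> - c)) * (normal_density \<mu> \<sigma> x * (x - \<mu>)^(2*0+1))
         + (\<mu> - c)\<^sup>2 * normal_density \<mu> \<sigma> x)
       = (\<lambda>x. normal_density \<mu> \<sigma> x * (x - c)\<^sup>2)"
    by (rule ext) (simp add: power2_eq_square algebra_simps)
  ultimately have "has_bochner_integral lborel (\<lambda>x. normal_density \<mu> \<sigma> x * (x - c)\<^sup>2)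
      ((\<mu> - c)\<^sup>2 + \<sigma>\<^sup>2)"
    by (simp add: add_ac)
  then show ?thesis
    by (subst nn_integral_eq_integral) (auto simp: has_bochner_integral_iff intro!: mult_nonneg_nonneg)
qed

lemma borel_measurable_vec_const: "(\<lambda>t::real. (\<chi> _::'n::finite. t)) \<in> borel_measurable borel"
proof -
  have "\<forall>b\<in>(Basis :: (real^'n) set). (\<lambda>t::real. (\<chi> _::'n. t) \<bullet> b) \<in> borel_measurable borel"
    by (auto simp: Basis_vec_def inner_axis)
  then show ?thesis by (subst borel_measurable_euclidean_space) simp
qed

lemma nn_integral_lborel_vec1:
  assumes [measurable]: "g \<in> borel_measurable (borel :: (real^1) measure)"
  shows "(\<integral>\<^sup>+y. g y \<partial>(lborel :: (real^1) measure)) = (\<integral>\<^sup>+t. g (\<chi> _. t) \<partial>lborel)"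
proof -
  interpret product_sigma_finite "\<lambda>_::1. lborel :: real measure" by standard
  have U: "(UNIV :: 1 set) = {1}" by auto
  have e: "(\<chi> i. f i) = (\<chi> _::1. f 1)" for f :: "1 \<Rightarrow> real"
    by (simp add: vec_eq_iff)
  have "(\<integral>\<^sup>+y. g y \<partial>(lborel :: (real^1) measure))
      = (\<integral>\<^sup>+f. g (\<chi> i. f i) \<partial>Pi\<^sub>M UNIV (\<lambda>_::1. lborel))"
    by (subst lborel_vec_eq_distr_PiM)
      (subst nn_integral_distr[OF measurable_vec_lambda_PiM], simp only: measurable_distr_eq1 assms, rule refl)
  also have "\<dots> = (\<integral>\<^sup>+f. g (\<chi> _::1. f 1) \<partial>Pi\<^sub>M UNIV (\<lambda>_::1. lborel))"
    by (intro nn_integral_cong arg_cong[where f=g] e)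
  also have "\<dots> = (\<integral>\<^sup>+f. g (\<chi> _::1. f 1) \<partial>Pi\<^sub>M {1} (\<lambda>_::1. lborel))"
    unfolding U ..
  also have "\<dots> = (\<integral>\<^sup>+t. g (\<chi> _. t) \<partial>lborel)"
    by (rule product_nn_integral_singleton)
      (use measurable_compose[OF borel_measurable_vec_const assms] in simp)
  finally show ?thesis .
qed

lemma nn_integral_sq_mvn_density_vec1:
  fixes s c :: real and m :: "real^1"
  assumes s: "s > 0"
  shows "(\<integral>\<^sup>+y. ennreal ((y$1 - c)\<^sup>2 * mvn_density m (\<chi> _ _. s) y) \<partial>lborel)
       = ennreal ((m$1 - c)\<^sup>2 + s)"
proof -
  define a where "a = m$1"
  have m_eq: "m = (\<chi> _. a)"
    unfolding a_def vec_eq_iff by (metis num1_eq1 vec_lambda_beta)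
  have inv: "matrix_inv (\<chi> _ _. s :: real^1^1) = (\<chi> _ _. 1/s)"
    by (rule matrix_inv_unique_right) (use s in \<open>simp add: matrix_matrix_mult_def mat_def vec_eq_iff\<close>)
  have mvn: "mvn_density (\<chi> _::1. a) (\<chi> _ _. s) (\<chi> _. t) = normal_density a (sqrt s) t" for t
  proof -
    have "((\<chi> _::1. t) - (\<chi> _. a)) \<bullet> ((\<chi> _ _. 1/s) *v ((\<chi> _::1. t) - (\<chi> _. a))) = (t - a)\<^sup>2 / s"
      by (simp add: inner_vec_def matrix_vector_mult_def power2_eq_square)
    then show ?thesis
      unfolding mvn_density_def normal_density_def inv using s by (simp add: det_1 real_sqrt_mult)
  qed
  have "(\<lambda>y. ennreal ((y$1 - c)\<^sup>2 * mvn_density (\<chi> _::1. a) (\<chi> _ _. s) y)) \<in> borel_measurable borel"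
    by measurable
  then have "(\<integral>\<^sup>+y. ennreal ((y$1 - c)\<^sup>2 * mvn_density (\<chi> _::1. a) (\<chi> _ _. s) y) \<partial>lborel)
      = (\<integral>\<^sup>+t. ennreal (normal_density a (sqrt s) t * (t - c)\<^sup>2) \<partial>lborel)"
    by (simp only: nn_integral_lborel_vec1 mvn vec_lambda_beta mult.commute)
  also have "\<dots> = ennreal ((a - c)\<^sup>2 + s)"
    using nn_integral_normal_density_sq[of "sqrt s" a c] s by simp
  finally show ?thesis unfolding m_eq by simp
qed

lemma mat_1_vec1: "(mat 1 :: real^1^1) = (\<chi> _ _. 1)"
  by (simp add: mat_def vec_eq_iff)

lemma row_mat_mult_vector: "(\<chi> _::1. w) *v r = (\<chi> _::1. w \<bullet> r)"
  by (simp add: matrix_vector_mult_def inner_vec_def vec_eq_iff mult.commute)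

lemma row_mat_congruence:
  "mat 1 + (\<chi> _::1. w) ** S ** transpose (\<chi> _::1. w) = (\<chi> _ _. 1 + w \<bullet> (S *v w))"
proof -
  have "(mat 1 + (\<chi> _::1. w) ** S ** transpose (\<chi> _::1. w))$i$j = 1 + w \<bullet> (S *v w)" for i j :: 1
  proof -
    have ij: "i = j" by (metis num1_eq1)
    show ?thesis
      unfolding ij
      by (simp add: matrix_matrix_mult_def transpose_def mat_def inner_vec_def matrix_vector_mult_def
          sum_distrib_left sum_distrib_right mult_ac) (subst sum.swap, simp add: mult_ac)
  qed
  then show ?thesis by (simp add: vec_eq_iff)
qed

text \<open>Add independent noise \<open>y ~ N(w \<bullet> r, 1)\<close>: the second moment of \<open>y\<close> is computed once from
  the convolution formula for the \<open>1 \<times> n\<close> matrix with row \<open>w\<close>, and once by integrating out \<open>y\<close>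
  first, which gives the second moment of \<open>w \<bullet> r\<close> plus one.\<close>

lemma nn_integral_sq_mvn_density_unit_noise:
  fixes S :: "real^'n::finite^'n" and mu :: "real^'n" and X :: "real^'n^1"
  assumes pS: "pos_def_mat S"
  shows "(\<integral>\<^sup>+y. ennreal ((y$1 - c)\<^sup>2 * mvn_density (X *v mu) (mat 1 + X ** S ** transpose X) y) \<partial>lborel)
       = (\<integral>\<^sup>+r. ennreal (((X *v r)$1 - c)\<^sup>2 * mvn_density mu S r) \<partial>lborel) + 1"
proof -
  have p1: "pos_def_mat (mat 1 :: real^1^1)" by (rule pos_def_mat_one)
  have psf: "pair_sigma_finite (lborel :: (real^'n) measure) (lborel :: (real^1) measure)"
    by (simp add: pair_sigma_finite_def lborel.sigma_finite_measure_axioms)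
  have "(\<integral>\<^sup>+y. ennreal ((y$1 - c)\<^sup>2 * mvn_density (X *v mu) (mat 1 + X ** S ** transpose X) y) \<partial>lborel)
      = (\<integral>\<^sup>+y. ennreal ((y$1 - c)\<^sup>2)
          * (\<integral>\<^sup>+r. ennreal (mvn_density mu S r * mvn_density (X *v r) (mat 1) y) \<partial>lborel) \<partial>lborel)"
    unfolding nn_integral_mvn_density_convolution[OF pS p1]
    using pos_def_mat_add_congruence[OF p1 pS, of X]
    by (intro nn_integral_cong) (simp add: ennreal_mult mvn_density_nonneg)
  also have "\<dots> = (\<integral>\<^sup>+y. (\<integral>\<^sup>+r. ennreal ((y$1 - c)\<^sup>2 * mvn_density mu S r
                                      * mvn_density (X *v r) (mat 1) y) \<partial>lborel) \<partial>lborel)"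
    by (intro nn_integral_cong, subst nn_integral_cmult[symmetric])
       (auto simp: ennreal_mult[symmetric] mvn_density_nonneg[OF pS] mvn_density_nonneg[OF p1] mult.assoc)
  also have "\<dots> = (\<integral>\<^sup>+r. (\<integral>\<^sup>+y. ennreal ((y$1 - c)\<^sup>2 * mvn_density mu S r
                                      * mvn_density (X *v r) (mat 1) y) \<partial>lborel) \<partial>lborel)"
    by (rule pair_sigma_finite.Fubini'[OF psf]) measurable
  also have "\<dots> = (\<integral>\<^sup>+r. ennreal (mvn_density mu S r)
      * (\<integral>\<^sup>+y. ennreal ((y$1 - c)\<^sup>2 * mvn_density (X *v r) (mat 1) y) \<partial>lborel) \<partial>lborel)"
    by (intro nn_integral_cong, subst nn_integral_cmult[symmetric])
       (auto simp: ennreal_mult[symmetric] mvn_density_nonneg[OF pS] mvn_density_nonneg[OF p1] mult_ac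
         intro!: nn_integral_cong)
  also have "\<dots> = (\<integral>\<^sup>+r. ennreal (mvn_density mu S r) * ennreal (((X *v r)$1 - c)\<^sup>2 + 1) \<partial>lborel)"
    unfolding mat_1_vec1 using nn_integral_sq_mvn_density_vec1[where s=1 and c=c] by simp
  also have "\<dots> = (\<integral>\<^sup>+r. ennreal (((X *v r)$1 - c)\<^sup>2 * mvn_density mu S r)
                      + ennreal (mvn_density mu S r) \<partial>lborel)"
    by (intro nn_integral_cong)
       (auto simp: ennreal_mult[symmetric] mvn_density_nonneg[OF pS] distrib_left mult.commute
         ennreal_plus[symmetric] simp del: ennreal_plus)
  also have "\<dots> = (\<integral>\<^sup>+r. ennreal (((X *v r)$1 - c)\<^sup>2 * mvn_density mu S r) \<partial>lborel) + 1"
    by (subst nn_integral_add) (auto simp: nn_integral_mvn_density[OF pS])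
  finally show ?thesis .
qed

lemma nn_integral_sq_inner_mvn_density:
  fixes S :: "real^'n::finite^'n" and mu w :: "real^'n" and c :: real
  assumes pS: "pos_def_mat S"
  shows "(\<integral>\<^sup>+r. ennreal ((w \<bullet> r - c)\<^sup>2 * mvn_density mu S r) \<partial>lborel)
       = ennreal ((w \<bullet> mu - c)\<^sup>2 + w \<bullet> (S *v w))"
proof -
  define X :: "real^'n^1" where "X = (\<chi> _. w)"
  have Xr: "X *v r = (\<chi> _::1. w \<bullet> r)" for r unfolding X_def by (rule row_mat_mult_vector)
  have vpos: "w \<bullet> (S *v w) \<ge> 0" by (rule pos_def_mat_nonneg[OF pS])
  have "ennreal ((w \<bullet> mu - c)\<^sup>2 + (1 + w \<bullet> (S *v w)))
      = (\<integral>\<^sup>+y. ennreal ((y$1 - c)\<^sup>2 * mvn_density (X *v mu) (mat 1 + X ** S ** transpose X) y) \<partial>lborel)"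
    unfolding Xr unfolding X_def row_mat_congruence
    using nn_integral_sq_mvn_density_vec1[where s="1 + w \<bullet> (S *v w)" and m="\<chi> _. w \<bullet> mu" and c=c] vpos
    by simp
  also have "\<dots> = (\<integral>\<^sup>+r. ennreal ((w \<bullet> r - c)\<^sup>2 * mvn_density mu S r) \<partial>lborel) + 1"
    using nn_integral_sq_mvn_density_unit_noise[OF pS, where X=X and mu=mu and c=c]
    unfolding Xr by simp
  finally have sum: "ennreal ((w \<bullet> mu - c)\<^sup>2 + (1 + w \<bullet> (S *v w)))
      = (\<integral>\<^sup>+r. ennreal ((w \<bullet> r - c)\<^sup>2 * mvn_density mu S r) \<partial>lborel) + 1" .
  have "ennreal ((w \<bullet> mu - c)\<^sup>2 + (1 + w \<bullet> (S *v w))) = 1 + ennreal ((w \<bullet> mu - c)\<^sup>2 + w \<bullet> (S *v w))"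
  proof -
    have "(w \<bullet> mu - c)\<^sup>2 + (1 + w \<bullet> (S *v w)) = 1 + ((w \<bullet> mu - c)\<^sup>2 + w \<bullet> (S *v w))" by simp
    then show ?thesis using vpos by (simp only: ennreal_plus[symmetric]) (subst ennreal_plus, auto)
  qed
  with sum have "1 + (\<integral>\<^sup>+r. ennreal ((w \<bullet> r - c)\<^sup>2 * mvn_density mu S r) \<partial>lborel)
      = 1 + ennreal ((w \<bullet> mu - c)\<^sup>2 + w \<bullet> (S *v w))"
    by (simp only: add.commute)
  then show ?thesis
    unfolding ennreal_add_left_cancel by simp
qed

lemma has_bochner_integral_sq_inner_mvn_density:
  fixes S :: "real^'n::finite^'n" and mu w :: "real^'n"
  assumes pS: "pos_def_mat S"
  shows "has_bochner_integral lborel (\<lambda>r. (w \<bullet> r - c)\<^sup>2 * mvn_density mu S r)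
           ((w \<bullet> mu - c)\<^sup>2 + w \<bullet> (S *v w))"
  using pos_def_mat_nonneg[OF pS, of w]
  by (intro has_bochner_integral_nn_integral)
    (auto simp: mvn_density_nonneg[OF pS] nn_integral_sq_inner_mvn_density[OF pS])

lemma integral_inner_mvn_density:
  fixes S :: "real^'n::finite^'n" and mu w :: "real^'n"
  assumes pS: "pos_def_mat S"
  shows "(\<integral>r. (w \<bullet> r) * mvn_density mu S r \<partial>lborel) = w \<bullet> mu"
proof -
  have H: "has_bochner_integral lborel
      (\<lambda>r. ((w \<bullet> r - (-1))\<^sup>2 * mvn_density mu S r - (w \<bullet> r - 1)\<^sup>2 * mvn_density mu S r) / 4)
      ((((w \<bullet> mu - (-1))\<^sup>2 + w \<bullet> (S *v w)) - ((w \<bullet> mu - 1)\<^sup>2 + w \<bullet> (S *v w))) / 4)"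
    by (intro has_bochner_integral_divide_zero has_bochner_integral_diff
        has_bochner_integral_sq_inner_mvn_density[OF pS])
  have F: "(\<lambda>r. ((w \<bullet> r - (-1))\<^sup>2 * mvn_density mu S r - (w \<bullet> r - 1)\<^sup>2 * mvn_density mu S r) / 4)
      = (\<lambda>r. (w \<bullet> r) * mvn_density mu S r)"
    by (rule ext) (simp add: power2_eq_square algebra_simps)
  have V: "(((w \<bullet> mu - (-1))\<^sup>2 + w \<bullet> (S *v w)) - ((w \<bullet> mu - 1)\<^sup>2 + w \<bullet> (S *v w))) / 4 = w \<bullet> mu"
    by (simp add: power2_eq_square algebra_simps)
  show ?thesis
    using H unfolding F V by (rule has_bochner_integral_integral_eq)
qed

section \<open>Mean-variance optimisation\<close>

lemma mean_variance_gap: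
  fixes Sig :: "real^'n::finite^'n" and mu w :: "real^'n"
  assumes "pos_def_mat Sig" "gamma \<noteq> 0"
  defines "h \<equiv> (1 / gamma) *\<^sub>R (matrix_inv Sig *v mu)"
  shows "(h \<bullet> mu - gamma / 2 * (h \<bullet> (Sig *v h))) - (w \<bullet> mu - gamma / 2 * (w \<bullet> (Sig *v w)))
       = gamma / 2 * ((w - h) \<bullet> (Sig *v (w - h)))"
proof -
  have Sh: "Sig *v h = (1 / gamma) *\<^sub>R mu"
    unfolding h_def
    by (simp add: matrix_vector_mult_scaleR mult_vector_matrix_inv_cancel pos_def_mat_invertible assms(1))
  have "h \<bullet> (Sig *v w) = w \<bullet> (Sig *v h)"
    using inner_symmetric_matrix[OF pos_def_mat_symmetric[OF assms(1)]] by blast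
  with Sh assms(2) show ?thesis
    by (simp add: matrix_vector_mult_diff_distrib inner_diff_left inner_diff_right field_simps)
qed

lemma mean_variance_argmax:
  fixes Sig :: "real^'n::finite^'n" and mu w :: "real^'n"
  assumes Sig: "pos_def_mat Sig" and gamma: "gamma > 0"
  defines "u \<equiv> \<lambda>w. w \<bullet> mu - gamma / 2 * (w \<bullet> (Sig *v w))"
    and "h \<equiv> (1 / gamma) *\<^sub>R (matrix_inv Sig *v mu)"
  shows "u w \<le> u h" and "u w = u h \<Longrightarrow> w = h"
proof -
  have gap: "u h - u w = gamma / 2 * ((w - h) \<bullet> (Sig *v (w - h)))"
    unfolding u_def h_def using mean_variance_gap[OF Sig] gamma by simp
  have "0 \<le> gamma / 2 * ((w - h) \<bullet> (Sig *v (w - h)))"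
    using pos_def_mat_nonneg[OF Sig, of "w - h"] gamma by simp
  with gap show "u w \<le> u h" by linarith
  show "w = h" if "u w = u h"
  proof (rule ccontr)
    assume "w \<noteq> h"
    then have "0 < (w - h) \<bullet> (Sig *v (w - h))" using Sig unfolding pos_def_mat_def by auto
    then show False using gap that gamma by simp
  qed
qed

lemma mv_objective_gaussian:
  assumes dens: "\<And>r. blapt_cond_density xi V Omega F X D q r = mvn_density mu Sig r"
    and Sig: "pos_def_mat Sig"
  shows "mv_objective xi V Omega F X D gamma q w = w \<bullet> mu - gamma / 2 * (w \<bullet> (Sig *v w))"
proof -
  have mean: "blapt_cond_exp xi V Omega F X D q w = w \<bullet> mu"
    unfolding blapt_cond_exp_def dens by (rule integral_inner_mvn_density[OF Sig])
  have "blapt_cond_var xi V Omega F X D q w = w \<bullet> (Sig *v w)"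
    unfolding blapt_cond_var_def mean dens
    using has_bochner_integral_integral_eq[OF has_bochner_integral_sq_inner_mvn_density[OF Sig]]
    by simp
  then show ?thesis unfolding mv_objective_def mean by simp
qed

section \<open>The posterior predictive distribution\<close>

lemma blapt_density_q_eq:
  assumes pV: "pos_def_mat V" and pO: "pos_def_mat Omega"
  shows "blapt_density_q xi V Omega q = mvn_density xi (Omega + V) q"
  using integral_mvn_density_convolution[OF pV pO, where m=xi and X="mat 1" and r=q]
  unfolding blapt_density_q_def by (simp add: mvn_density_commute[of _ Omega])

lemma blapt_prior_times_likelihood:
  fixes V Omega :: "real^'k::finite^'k"
  assumes pV: "pos_def_mat V" and pO: "pos_def_mat Omega"
  defines "S \<equiv> matrix_inv (matrix_inv V + matrix_inv Omega)"
  shows "mvn_density xi V theta * mvn_density theta Omega q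
       = blapt_density_q xi V Omega q
         * mvn_density (S *v (matrix_inv V *v xi + matrix_inv Omega *v q)) S theta"
proof -
  define A where "A = matrix_inv V + matrix_inv Omega"
  have iA: "invertible A"
    unfolding A_def
    by (intro pos_def_mat_invertible pos_def_mat_add pos_def_mat_matrix_inv pV pO)
  have "matrix_inv V *v xi + matrix_inv Omega *v q = A *v xi + matrix_inv Omega *v (q - xi)"
    unfolding A_def by (simp add: matrix_vector_mult_add_rdistrib matrix_vector_mult_diff_distrib)
  then have mean: "xi + matrix_inv A *v (matrix_inv Omega *v (q - xi))
      = matrix_inv A *v (matrix_inv V *v xi + matrix_inv Omega *v q)"
    by (simp add: matrix_vector_right_distrib matrix_inv_mult_vector_cancel[OF iA])
  show ?thesis
    using mvn_density_linear_model_factor[OF pV pO, where m=xi and X="mat 1" and f=theta and r=q]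
    unfolding blapt_density_q_eq[OF pV pO] S_def
    by (simp add: mvn_density_commute[of _ Omega] mean[unfolded A_def])
qed

lemma blapt_cond_density_eq:
  fixes X :: "real^'k::finite^'n::finite" and D :: "real^'n^'n" and F V Omega :: "real^'k^'k"
  assumes pD: "pos_def_mat D" and pF: "pos_def_mat F"
    and pV: "pos_def_mat V" and pO: "pos_def_mat Omega"
  defines "S \<equiv> matrix_inv (matrix_inv V + matrix_inv Omega)"
  shows "blapt_cond_density xi V Omega F X D q r
     = mvn_density (X *v (S *v (matrix_inv V *v xi + matrix_inv Omega *v q)))
         (D + X ** (S + F) ** transpose X) r"
proof -
  define E where "E = S *v (matrix_inv V *v xi + matrix_inv Omega *v q)"
  define Sr where "Sr = D + X ** F ** transpose X"
  have pS: "pos_def_mat S"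
    unfolding S_def by (intro pos_def_mat_matrix_inv pos_def_mat_add pV pO)
  have pSr: "pos_def_mat Sr" unfolding Sr_def by (rule pos_def_mat_add_congruence[OF pD pF])
  have inner: "(\<integral>f. mvn_density xi V th * mvn_density th Omega q * mvn_density th F f
                      * mvn_density (X *v f) D r \<partial>lborel)
      = blapt_density_q xi V Omega q * (mvn_density E S th * mvn_density (X *v th) Sr r)" for th
    using integral_mvn_density_convolution[OF pF pD, where m=th and X=X and r=r]
    unfolding blapt_prior_times_likelihood[OF pV pO] S_def[symmetric] E_def[symmetric] Sr_def
    by (simp add: mult.assoc)
  have "blapt_density_qr xi V Omega F X D q r
      = blapt_density_q xi V Omega q * mvn_density (X *v E) (Sr + X ** S ** transpose X) r"
    unfolding blapt_density_qr_def inner integral_mult_right_zero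
      integral_mvn_density_convolution[OF pS pSr] ..
  moreover have "Sr + X ** S ** transpose X = D + X ** (S + F) ** transpose X"
    unfolding Sr_def by (simp add: matrix_add_ldistrib matrix_mul_add_rdistrib add_ac)
  moreover have "blapt_density_q xi V Omega q > 0"
    unfolding blapt_density_q_eq[OF pV pO] by (intro mvn_density_pos pos_def_mat_add pO pV)
  ultimately show ?thesis
    unfolding blapt_cond_density_def E_def by simp
qed

theorem mainTheorem1:
  fixes X :: "real^'k^'n" and D :: "real^'n^'n"
    and F V Omega S Varf :: "real^'k^'k" and xi :: "real^'k"
    and Ef :: "real^'k \<Rightarrow> real^'k"
    and VarR :: "real^'n^'n" and ER :: "real^'k \<Rightarrow> real^'n"
    and gamma :: real
  assumes D_pd: "pos_def_mat D" and D_diag: "diagonal_mat D"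
    and F_pd: "pos_def_mat F" and V_pd: "pos_def_mat V" and Omega_pd: "pos_def_mat Omega"
    and S_def: "S = matrix_inv (matrix_inv V + matrix_inv Omega)"
    and Ef_def: "\<And>q. Ef q = S *v (matrix_inv V *v xi + matrix_inv Omega *v q)"
    and Varf_def: "Varf = S + F"
    and VarR_def: "VarR = matrix_inv (matrix_inv D - matrix_inv D ** X
                     ** matrix_inv (transpose X ** matrix_inv D ** X + matrix_inv Varf)
                     ** transpose X ** matrix_inv D)"
    and ER_def: "\<And>q. ER q = (VarR ** matrix_inv D ** X
                     ** matrix_inv (transpose X ** matrix_inv D ** X + matrix_inv Varf)
                     ** matrix_inv Varf) *v Ef q"
    and gamma_pos: "gamma > 0"
  shows "(\<forall>q r. blapt_cond_density xi V Omega F X D q r = mvn_density (ER q) VarR r)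
    \<and> (\<forall>q. let h = (1 / gamma) *\<^sub>R (matrix_inv VarR *v ER q) in
          (\<forall>w. mv_objective xi V Omega F X D gamma q w \<le> mv_objective xi V Omega F X D gamma q h)
        \<and> (\<forall>w. mv_objective xi V Omega F X D gamma q w = mv_objective xi V Omega F X D gamma q h \<longrightarrow> w = h)
        \<and> h = (1 / gamma) *\<^sub>R ((matrix_inv D ** X
                  ** matrix_inv (transpose X ** matrix_inv D ** X + matrix_inv Varf)
                  ** matrix_inv Varf) *v Ef q))"
proof -
  define B where
    "B = matrix_inv D ** X ** matrix_inv (transpose X ** matrix_inv D ** X + matrix_inv Varf)
           ** matrix_inv Varf"
  have pVf: "pos_def_mat Varf"
    unfolding Varf_def S_def by (intro pos_def_mat_add pos_def_mat_matrix_inv F_pd V_pd Omega_pd)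
  note woodbury = woodbury_pos_def[OF D_pd pVf, of X]
  have VarR_eq: "VarR = D + X ** Varf ** transpose X"
    unfolding VarR_def woodbury(1) ..
  have pR: "pos_def_mat VarR"
    unfolding VarR_eq by (rule pos_def_mat_add_congruence[OF D_pd pVf])
  have ER_eq: "ER q = X *v Ef q" for q
    unfolding ER_def VarR_eq woodbury(2) ..
  have dens: "blapt_cond_density xi V Omega F X D q r = mvn_density (ER q) VarR r" for q r
    unfolding blapt_cond_density_eq[OF D_pd F_pd V_pd Omega_pd] ER_eq Ef_def VarR_eq Varf_def S_def ..
  have h_eq: "matrix_inv VarR *v ER q = B *v Ef q" for q
  proof -
    have "ER q = VarR *v (B *v Ef q)"
      unfolding ER_def B_def by (simp add: matrix_vector_mul_assoc matrix_mul_assoc)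
    then show ?thesis by (simp add: matrix_inv_mult_vector_cancel pos_def_mat_invertible[OF pR])
  qed
  have obj: "mv_objective xi V Omega F X D gamma q w = w \<bullet> ER q - gamma / 2 * (w \<bullet> (VarR *v w))"
    for q w
    using dens by (intro mv_objective_gaussian pR)
  show ?thesis
    unfolding Let_def obj B_def[symmetric] h_eq[symmetric]
    using dens mean_variance_argmax[OF pR gamma_pos] by blast
qed

end
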